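(* Let $\mathbb{X}$ be a reverse differential restriction category (satisfying all of [RD.1]–[RD.9]) with countable disjoint joins. For $g:A\to B$ put $D[g]:=(\iota_0\times 1_A)R[R[g]]\pi_1$, and for $g:A\to A$ put $T(g):=\langle\pi_0 g,D[g]\rangle:A\times A\to A\times A$. Let $f:A\to A$ and let $b_T,b_F:A\to 1$ be maps with $\overline{b_T}\,\overline{b_F}$ nowhere defined. Define $$W:=\bigvee_{i\ge0}(\overline{b_T}f)^i\overline{b_F},\qquad W':=\bigvee_{i\ge0}(\overline{\pi_0b_T}\,T(f))^i\,\overline{\pi_0 b_F},$$ where $h^0=1$ and $h^{i+1}=h\,h^i$. Then $$R[W]=(\iota_0\times 1_A)\,R[W'\pi_1]\,\pi_1 :A\times A\to A,$$ where $\iota_0=\langle 1_A,0\rangle:A\to A\times A$. That is, the reverse derivative of the while-loop is the dagger of the forward-derivative while-loop of the preceding proposition: $[\![v.\mathrm{rd}(x.\texttt{while } b\texttt{ do } f)(a)]\!]$ is obtained by daggering the term $\texttt{let } x=a,y=v\texttt{ in }\mathrm{snd}(\texttt{while }\pi_0b\texttt{ do }(\pi_0f,\mathrm{fd}(x.f)(x).y))$.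
   Context: Composition is written in diagrammatic order: $fg$ means "first $f$, then $g$". A restriction category is a category with an operation sending each $f:A\to B$ to a map $\bar f:A\to A$ such that $\bar f f=f$, $\bar f\bar g=\bar g\bar f$ (for $f,g$ with common domain), $\overline{\bar f g}=\bar f\bar g$, and $f\bar g=\overline{fg}\,f$. A map $f$ is total if $\bar f=1$. For parallel maps: - $f\le g$ means $\bar f g=f$; - a nowhere-defined map $\emptyset$ is a least element for $\le$; - $f,g$ are disjoint if $\bar f g$ is nowhere defined; - the join $\bigvee_i f_i$ of a family is its least upper bound for $\le$. "Countable disjoint joins" means that every countable family of pairwise disjoint parallel maps has a join, and composition preserves such joins on both sides: $h(\bigvee_i f_i)k=\bigvee_i hf_ik$. The category has restriction products if: - there is an object $1$ with a total map $!_A:A\to 1$ for each $A$ such that every $f:A\to1$ equals $\bar f\,!_A$; - for all $A,B$ there is an object $A\times B$ with total maps $\pi_0,\pi_1$ such that for all $f:C\to A$, $g:C\to B$ there is a unique $\langle f,g\rangle$ with $\langle f,g\rangle\pi_0=\bar g f$ and $\langle f,g\rangle\pi_1=\bar f g$. Write $f\times g=\langle\pi_0f,\pi_1g\rangle$. A Cartesian left additive restriction category is a restriction category with restriction products in which every hom-set is a commutative monoid $(+,0)$ such that: - $\overline{f+g}=\bar f\bar g$ and $\bar 0=1$; - $x(f+g)=xf+xg$ and $x0=\bar x 0$; - $(f+g)\pi_i=f\pi_i+g\pi_i$ and $0\pi_i=0$. Write $\iota_0=\langle 1,0\rangle$ and $\iota_1=\langle 0,1\rangle$. A reverse differential restriction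 category (RDRC) is a Cartesian left additive restriction category with an operation sending each $f:A\to B$ to $R[f]:A\times B\to A$ such that: - [RD.1] $R[f+g]=R[f]+R[g]$ and $R[0]=0$. - [RD.2] $\langle a,b+c\rangle R[f]=\langle a,b\rangle R[f]+\langle a,c\rangle R[f]$ and $\langle a,0\rangle R[f]=\overline{af}\,0$. - [RD.3] $R[\pi_j]=\pi_1\iota_j$. - [RD.4] $R[\langle f,g\rangle]=(1\times\pi_0)R[f]+(1\times\pi_1)R[g]$. - [RD.5] $R[fg]=\langle \pi_0,\langle\pi_0 f,\pi_1\rangle R[g]\rangle R[f]$. - [RD.6] $\langle 1\times\pi_0,\,0\times\pi_1\rangle(\iota_0\times 1)R[R[R[f]]]\pi_1=(1\times\pi_1)R[f]$. - [RD.7] With $g:=(\iota_0\times 1)R[R[f]]\pi_1$, one has $(\iota_0\times1)R[R[g]]\pi_1=\mathrm{ex}\,(\iota_0\times 1)R[R[g]]\pi_1$, where $\mathrm{ex}=\langle\pi_0\times\pi_0,\pi_1\times\pi_1\rangle$. - [RD.8] $\overline{R[f]}=\bar f\times 1$. - [RD.9] $R[\bar f]=(\bar f\times 1)\pi_1$. Semantics of the SDPL formulation: - $[\![\texttt{while } b\texttt{ do } f]\!]=\bigvee_{i\ge0}(\overline{b_T}[\![f]\!])^i\overline{b_F}$; - $[\![v.\mathrm{rd}(x.m)(a)]\!]=\langle\langle1,[\![a]\!]\rangle,[\![v]\!]\rangle R[[\![m]\!]]\pi_1$; - the dagger of $g:A\times B\to C$ is $g^{\dagger[A]}:=(\iota_0\times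 1)R[g]\pi_1:A\times C\to B$. *)

theory Defs
  imports Main
begin

text \<open>Composition is
written in diagrammatic order: cmp f g means "first f, then g".  Composition of
non-composable maps is junk and is never constrained.\<close>

record ('o, 'm) rcat =
  c_dom  :: "'m \<Rightarrow> 'o"
  c_cod  :: "'m \<Rightarrow> 'o"
  c_cmp  :: "'m \<Rightarrow> 'm \<Rightarrow> 'm"
  c_id   :: "'o \<Rightarrow> 'm"
  c_rst  :: "'m \<Rightarrow> 'm"
  c_one  :: "'o"
  c_bang :: "'o \<Rightarrow> 'm"
  c_prod :: "'o \<Rightarrow> 'o \<Rightarrow> 'o"
  c_pi0  :: "'o \<Rightarrow> 'o \<Rightarrow> 'm"
  c_pi1  :: "'o \<Rightarrow> 'o \<Rightarrow> 'm"
  c_pair :: "'m \<Rightarrow> 'm \<Rightarrow> 'm"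
  c_plus :: "'m \<Rightarrow> 'm \<Rightarrow> 'm"
  c_zero :: "'o \<Rightarrow> 'o \<Rightarrow> 'm"
  c_R    :: "'m \<Rightarrow> 'm"

definition hom :: "('o,'m) rcat \<Rightarrow> 'o \<Rightarrow> 'o \<Rightarrow> 'm \<Rightarrow> bool" where
  "hom C A B f \<longleftrightarrow> c_dom C f = A \<and> c_cod C f = B"

definition parallel :: "('o,'m) rcat \<Rightarrow> 'm \<Rightarrow> 'm \<Rightarrow> bool" where
  "parallel C f g \<longleftrightarrow> c_dom C f = c_dom C g \<and> c_cod C f = c_cod C g"

definition is_category :: "('o,'m) rcat \<Rightarrow> bool" where
  "is_category C \<longleftrightarrow>
     (\<forall>A. hom C A A (c_id C A)) \<and>
     (\<forall>f g. c_cod C f = c_dom C g \<longrightarrow> hom C (c_dom C f) (c_cod C g) (c_cmp C f g)) \<and>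
     (\<forall>f. c_cmp C (c_id C (c_dom C f)) f = f \<and> c_cmp C f (c_id C (c_cod C f)) = f) \<and>
     (\<forall>f g h. c_cod C f = c_dom C g \<and> c_cod C g = c_dom C h \<longrightarrow>
        c_cmp C (c_cmp C f g) h = c_cmp C f (c_cmp C g h))"

definition is_restriction_category :: "('o,'m) rcat \<Rightarrow> bool" where
  "is_restriction_category C \<longleftrightarrow> is_category C \<and>
     (\<forall>f. hom C (c_dom C f) (c_dom C f) (c_rst C f)) \<and>
     (\<forall>f. c_cmp C (c_rst C f) f = f) \<and>
     (\<forall>f g. c_dom C f = c_dom C g \<longrightarrow>
        c_cmp C (c_rst C f) (c_rst C g) = c_cmp C (c_rst C g) (c_rst C f)) \<and>
     (\<forall>f g. c_dom C f = c_dom C g \<longrightarrow>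
        c_rst C (c_cmp C (c_rst C f) g) = c_cmp C (c_rst C f) (c_rst C g)) \<and>
     (\<forall>f g. c_cod C f = c_dom C g \<longrightarrow>
        c_cmp C f (c_rst C g) = c_cmp C (c_rst C (c_cmp C f g)) f)"

definition total :: "('o,'m) rcat \<Rightarrow> 'm \<Rightarrow> bool" where
  "total C f \<longleftrightarrow> c_rst C f = c_id C (c_dom C f)"

definition rle :: "('o,'m) rcat \<Rightarrow> 'm \<Rightarrow> 'm \<Rightarrow> bool" where
  "rle C f g \<longleftrightarrow> parallel C f g \<and> c_cmp C (c_rst C f) g = f"

definition nowhere_defined :: "('o,'m) rcat \<Rightarrow> 'm \<Rightarrow> bool" where
  "nowhere_defined C f \<longleftrightarrow> (\<forall>g. parallel C f g \<longrightarrow> rle C f g)"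

definition disjoint_maps :: "('o,'m) rcat \<Rightarrow> 'm \<Rightarrow> 'm \<Rightarrow> bool" where
  "disjoint_maps C f g \<longleftrightarrow> parallel C f g \<and> nowhere_defined C (c_cmp C (c_rst C f) g)"

definition is_join :: "('o,'m) rcat \<Rightarrow> 'o \<Rightarrow> 'o \<Rightarrow> nat set \<Rightarrow> (nat \<Rightarrow> 'm) \<Rightarrow> 'm \<Rightarrow> bool" where
  "is_join C A B I fs j \<longleftrightarrow> hom C A B j \<and> (\<forall>i\<in>I. rle C (fs i) j) \<and>
     (\<forall>k. hom C A B k \<and> (\<forall>i\<in>I. rle C (fs i) k) \<longrightarrow> rle C j k)"

definition pairwise_disjoint :: "('o,'m) rcat \<Rightarrow> nat set \<Rightarrow> (nat \<Rightarrow> 'm) \<Rightarrow> bool" where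
  "pairwise_disjoint C I fs \<longleftrightarrow> (\<forall>i\<in>I. \<forall>j\<in>I. i \<noteq> j \<longrightarrow> disjoint_maps C (fs i) (fs j))"

text \<open>Countable disjoint joins: countable families are indexed by subsets of nat (this
covers finite and countably infinite families, including the empty one).\<close>
definition has_countable_disjoint_joins :: "('o,'m) rcat \<Rightarrow> bool" where
  "has_countable_disjoint_joins C \<longleftrightarrow>
     (\<forall>A B I fs. (\<forall>i\<in>I. hom C A B (fs i)) \<and> pairwise_disjoint C I fs \<longrightarrow>
        (\<exists>j. is_join C A B I fs j)) \<and>
     (\<forall>A B X Y I fs j h k. (\<forall>i\<in>I. hom C A B (fs i)) \<and> pairwise_disjoint C I fs \<and>
        is_join C A B I fs j \<and> hom C X A h \<and> hom C B Y k \<longrightarrow>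
        is_join C X Y I (\<lambda>i. c_cmp C (c_cmp C h (fs i)) k) (c_cmp C (c_cmp C h j) k))"

definition has_restriction_products :: "('o,'m) rcat \<Rightarrow> bool" where
  "has_restriction_products C \<longleftrightarrow>
     (\<forall>A. hom C A (c_one C) (c_bang C A) \<and> total C (c_bang C A)) \<and>
     (\<forall>A f. hom C A (c_one C) f \<longrightarrow> f = c_cmp C (c_rst C f) (c_bang C A)) \<and>
     (\<forall>A B. hom C (c_prod C A B) A (c_pi0 C A B) \<and> total C (c_pi0 C A B) \<and>
            hom C (c_prod C A B) B (c_pi1 C A B) \<and> total C (c_pi1 C A B)) \<and>
     (\<forall>X A B f g. hom C X A f \<and> hom C X B g \<longrightarrow>
        hom C X (c_prod C A B) (c_pair C f g) \<and>
        c_cmp C (c_pair C f g) (c_pi0 C A B) = c_cmp C (c_rst C g) f \<and>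
        c_cmp C (c_pair C f g) (c_pi1 C A B) = c_cmp C (c_rst C f) g \<and>
        (\<forall>h. hom C X (c_prod C A B) h \<and>
             c_cmp C h (c_pi0 C A B) = c_cmp C (c_rst C g) f \<and>
             c_cmp C h (c_pi1 C A B) = c_cmp C (c_rst C f) g \<longrightarrow> h = c_pair C f g))"

definition fprod :: "('o,'m) rcat \<Rightarrow> 'm \<Rightarrow> 'm \<Rightarrow> 'm" where
  "fprod C f g = c_pair C (c_cmp C (c_pi0 C (c_dom C f) (c_dom C g)) f)
                          (c_cmp C (c_pi1 C (c_dom C f) (c_dom C g)) g)"

definition iota0 :: "('o,'m) rcat \<Rightarrow> 'o \<Rightarrow> 'o \<Rightarrow> 'm" where
  "iota0 C A B = c_pair C (c_id C A) (c_zero C A B)"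

definition iota1 :: "('o,'m) rcat \<Rightarrow> 'o \<Rightarrow> 'o \<Rightarrow> 'm" where
  "iota1 C A B = c_pair C (c_zero C B A) (c_id C B)"

definition is_cartesian_left_additive :: "('o,'m) rcat \<Rightarrow> bool" where
  "is_cartesian_left_additive C \<longleftrightarrow>
     is_restriction_category C \<and> has_restriction_products C \<and>
     (\<forall>A B f g. hom C A B f \<and> hom C A B g \<longrightarrow> hom C A B (c_plus C f g)) \<and>
     (\<forall>A B. hom C A B (c_zero C A B)) \<and>
     (\<forall>A B f g h. hom C A B f \<and> hom C A B g \<and> hom C A B h \<longrightarrow>
        c_plus C (c_plus C f g) h = c_plus C f (c_plus C g h)) \<and>
     (\<forall>A B f g. hom C A B f \<and> hom C A B g \<longrightarrow> c_plus C f g = c_plus C g f) \<and>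
     (\<forall>A B f. hom C A B f \<longrightarrow> c_plus C f (c_zero C A B) = f) \<and>
     (\<forall>A B f g. hom C A B f \<and> hom C A B g \<longrightarrow>
        c_rst C (c_plus C f g) = c_cmp C (c_rst C f) (c_rst C g)) \<and>
     (\<forall>A B. c_rst C (c_zero C A B) = c_id C A) \<and>
     (\<forall>X A B x f g. hom C X A x \<and> hom C A B f \<and> hom C A B g \<longrightarrow>
        c_cmp C x (c_plus C f g) = c_plus C (c_cmp C x f) (c_cmp C x g)) \<and>
     (\<forall>X A B x. hom C X A x \<longrightarrow>
        c_cmp C x (c_zero C A B) = c_cmp C (c_rst C x) (c_zero C X B)) \<and>
     (\<forall>X A B f g. hom C X (c_prod C A B) f \<and> hom C X (c_prod C A B) g \<longrightarrow>
        c_cmp C (c_plus C f g) (c_pi0 C A B) =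
          c_plus C (c_cmp C f (c_pi0 C A B)) (c_cmp C g (c_pi0 C A B)) \<and>
        c_cmp C (c_plus C f g) (c_pi1 C A B) =
          c_plus C (c_cmp C f (c_pi1 C A B)) (c_cmp C g (c_pi1 C A B))) \<and>
     (\<forall>X A B. c_cmp C (c_zero C X (c_prod C A B)) (c_pi0 C A B) = c_zero C X A \<and>
              c_cmp C (c_zero C X (c_prod C A B)) (c_pi1 C A B) = c_zero C X B)"

definition is_rdrc :: "('o,'m) rcat \<Rightarrow> bool" where
  "is_rdrc C \<longleftrightarrow> is_cartesian_left_additive C \<and>
     (\<forall>A B f. hom C A B f \<longrightarrow> hom C (c_prod C A B) A (c_R C f)) \<and>
     \<comment> \<open>RD.1\<close>
     (\<forall>A B f g. hom C A B f \<and> hom C A B g \<longrightarrow>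
        c_R C (c_plus C f g) = c_plus C (c_R C f) (c_R C g)) \<and>
     (\<forall>A B. c_R C (c_zero C A B) = c_zero C (c_prod C A B) A) \<and>
     \<comment> \<open>RD.2\<close>
     (\<forall>X A B a b c f. hom C X A a \<and> hom C X B b \<and> hom C X B c \<and> hom C A B f \<longrightarrow>
        c_cmp C (c_pair C a (c_plus C b c)) (c_R C f) =
          c_plus C (c_cmp C (c_pair C a b) (c_R C f)) (c_cmp C (c_pair C a c) (c_R C f))) \<and>
     (\<forall>X A B a f. hom C X A a \<and> hom C A B f \<longrightarrow>
        c_cmp C (c_pair C a (c_zero C X B)) (c_R C f) =
          c_cmp C (c_rst C (c_cmp C a f)) (c_zero C X A)) \<and>
     \<comment> \<open>RD.3\<close>
     (\<forall>A B. c_R C (c_pi0 C A B) =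
              c_cmp C (c_pi1 C (c_prod C A B) A) (iota0 C A B) \<and>
            c_R C (c_pi1 C A B) =
              c_cmp C (c_pi1 C (c_prod C A B) B) (iota1 C A B)) \<and>
     \<comment> \<open>RD.4\<close>
     (\<forall>X A B f g. hom C X A f \<and> hom C X B g \<longrightarrow>
        c_R C (c_pair C f g) =
          c_plus C (c_cmp C (fprod C (c_id C X) (c_pi0 C A B)) (c_R C f))
                   (c_cmp C (fprod C (c_id C X) (c_pi1 C A B)) (c_R C g))) \<and>
     \<comment> \<open>RD.5\<close>
     (\<forall>A B D f g. hom C A B f \<and> hom C B D g \<longrightarrow>
        c_R C (c_cmp C f g) =
          c_cmp C (c_pair C (c_pi0 C A D)
                     (c_cmp C (c_pair C (c_cmp C (c_pi0 C A D) f) (c_pi1 C A D)) (c_R C g)))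
                  (c_R C f)) \<and>
     \<comment> \<open>RD.6\<close>
     (\<forall>A B f. hom C A B f \<longrightarrow>
        c_cmp C (c_pair C (fprod C (c_id C A) (c_pi0 C B B))
                          (fprod C (c_zero C A A) (c_pi1 C B B)))
          (c_cmp C (c_cmp C (fprod C (iota0 C (c_prod C A B) A) (c_id C (c_prod C A B)))
                             (c_R C (c_R C (c_R C f))))
                   (c_pi1 C (c_prod C A B) A))
        = c_cmp C (fprod C (c_id C A) (c_pi1 C B B)) (c_R C f)) \<and>
     \<comment> \<open>RD.7\<close>
     (\<forall>A B f. hom C A B f \<longrightarrow>
        (let g = c_cmp C (c_cmp C (fprod C (iota0 C A B) (c_id C A)) (c_R C (c_R C f)))
                         (c_pi1 C A B);
             AA = c_prod C A A;
             h = c_cmp C (c_cmp C (fprod C (iota0 C AA B) (c_id C AA)) (c_R C (c_R C g)))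
                         (c_pi1 C AA B);
             ex = c_pair C (fprod C (c_pi0 C A A) (c_pi0 C A A))
                           (fprod C (c_pi1 C A A) (c_pi1 C A A))
         in h = c_cmp C ex h)) \<and>
     \<comment> \<open>RD.8\<close>
     (\<forall>A B f. hom C A B f \<longrightarrow> c_rst C (c_R C f) = fprod C (c_rst C f) (c_id C B)) \<and>
     \<comment> \<open>RD.9\<close>
     (\<forall>A B f. hom C A B f \<longrightarrow>
        c_R C (c_rst C f) = c_cmp C (fprod C (c_rst C f) (c_id C A)) (c_pi1 C A A))"

primrec mpow :: "('o,'m) rcat \<Rightarrow> 'o \<Rightarrow> 'm \<Rightarrow> nat \<Rightarrow> 'm" where
  "mpow C A h 0 = c_id C A"
| "mpow C A h (Suc i) = c_cmp C h (mpow C A h i)"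

definition fwdD :: "('o,'m) rcat \<Rightarrow> 'o \<Rightarrow> 'o \<Rightarrow> 'm \<Rightarrow> 'm" where
  "fwdD C A B g = c_cmp C (c_cmp C (fprod C (iota0 C A B) (c_id C A)) (c_R C (c_R C g)))
                          (c_pi1 C A B)"

definition tanT :: "('o,'m) rcat \<Rightarrow> 'o \<Rightarrow> 'm \<Rightarrow> 'm" where
  "tanT C A g = c_pair C (c_cmp C (c_pi0 C A A) g) (fwdD C A A g)"

end

theory Submission
  imports Defs
begin

text \<open>Both loops are joins of their unrollings, \<open>W = \<Or>\<^sub>i (\<bar>b\<^sub>T\<bar> f)\<^sup>i \<bar>b\<^sub>F\<bar>\<close> and
  \<open>W' = \<Or>\<^sub>i (\<bar>\<pi>\<^sub>0 b\<^sub>T\<bar> T(f))\<^sup>i \<bar>\<pi>\<^sub>0 b\<^sub>F\<bar>\<close>, and the unrollings are pairwise disjoint because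
  the guards are. The reverse derivative preserves disjoint joins (by RD.5 and RD.9,
  \<open>R[F\<^sub>i] = \<bar>\<pi>\<^sub>0 F\<^sub>i\<bar> R[J]\<close>), hence so does the dagger \<open>g\<^sup>\<dagger> = (\<iota>\<^sub>0 \<times> 1) R[g] \<pi>\<^sub>1\<close>. It therefore
  suffices to match the unrollings one by one, \<open>(F'\<^sub>i \<pi>\<^sub>1)\<^sup>\<dagger> = R[F\<^sub>i]\<close>, by induction on \<open>i\<close>.
  The base case is RD.9. In the step, the chain rule RD.5 evaluates \<open>R[T(f)]\<close> at points
  \<open>(a, 0)\<close>: there the component \<open>\<pi>\<^sub>0 f\<close> of \<open>T(f)\<close> contributes nothing, and the component
  \<open>D[f]\<close> contributes \<open>D[f]\<^sup>\<dagger> = R[f]\<close>, which is RD.6.\<close>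

locale restriction_category =
  fixes C :: "('o, 'm) rcat"
  assumes restriction_category: "is_restriction_category C"
begin

abbreviation src where "src \<equiv> c_dom C"
abbreviation tgt where "tgt \<equiv> c_cod C"
abbreviation cmp (infixr ";;" 70) where "f ;; g \<equiv> c_cmp C f g"
abbreviation rst where "rst \<equiv> c_rst C"
abbreviation ide where "ide \<equiv> c_id C"

lemma category: "is_category C"
  using restriction_category unfolding is_restriction_category_def by blast

lemma src_ide[simp]: "src (ide A) = A" and tgt_ide[simp]: "tgt (ide A) = A"
  using category unfolding is_category_def hom_def by blast+

lemma src_comp[simp]: "tgt f = src g \<Longrightarrow> src (f ;; g) = src f"
  and tgt_comp[simp]: "tgt f = src g \<Longrightarrow> tgt (f ;; g) = tgt g"
  using category unfolding is_category_def hom_def by blast+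

lemma ide_comp[simp]: "src f = A \<Longrightarrow> ide A ;; f = f"
  and comp_ide[simp]: "tgt f = B \<Longrightarrow> f ;; ide B = f"
  using category unfolding is_category_def by blast+

lemma comp_assoc[simp]: "tgt f = src g \<Longrightarrow> tgt g = src h \<Longrightarrow> (f ;; g) ;; h = f ;; (g ;; h)"
  using category unfolding is_category_def by blast

lemma src_rst[simp]: "src (rst f) = src f" and tgt_rst[simp]: "tgt (rst f) = src f"
  using restriction_category unfolding is_restriction_category_def hom_def by blast+

lemma rst_comp_self[simp]: "rst f ;; f = f"
  using restriction_category unfolding is_restriction_category_def by blast

lemma rst_commute: "src f = src g \<Longrightarrow> rst f ;; rst g = rst g ;; rst f"
  using restriction_category unfolding is_restriction_category_def by blast

lemma rst_rst_comp: "src f = src g \<Longrightarrow> rst (rst f ;; g) = rst f ;; rst g"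
  using restriction_category unfolding is_restriction_category_def by blast

lemma comp_rst: "tgt f = src g \<Longrightarrow> f ;; rst g = rst (f ;; g) ;; f"
  using restriction_category unfolding is_restriction_category_def by blast

lemma rst_comp_self_assoc[simp]: "tgt f = src h \<Longrightarrow> rst f ;; (f ;; h) = f ;; h"
  by (subst comp_assoc[symmetric]) simp_all

lemma rst_ide[simp]: "rst (ide A) = ide A"
  using rst_comp_self[of "ide A"] comp_ide[of "rst (ide A)" A] by simp

lemma rst_rst[simp]: "rst (rst f) = rst f"
  using rst_rst_comp[of f "ide (src f)"] by simp

lemma rst_idem[simp]: "rst f ;; rst f = rst f"
  using rst_rst_comp[of f f] by simp

lemma rst_idem_assoc[simp]: "src h = src f \<Longrightarrow> rst f ;; (rst f ;; h) = rst f ;; h"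
  by (subst comp_assoc[symmetric]) simp_all

lemma rst_left_commute:
  "src e = src f \<Longrightarrow> src f = src g \<Longrightarrow> rst e ;; (rst f ;; g) = rst f ;; (rst e ;; g)"
  by (simp add: rst_commute flip: comp_assoc)

lemma rst_comp_rst: "tgt f = src g \<Longrightarrow> rst (f ;; rst g) = rst (f ;; g)"
proof -
  assume fg: "tgt f = src g"
  have "rst (f ;; rst g) = rst (rst (f ;; g) ;; f)" using comp_rst[OF fg] by simp
  also have "\<dots> = rst f ;; rst (f ;; g)" using fg by (simp add: rst_rst_comp rst_commute)
  also have "\<dots> = rst (rst f ;; (f ;; g))" using fg rst_rst_comp[of f "f ;; g"] by simp
  finally show ?thesis using fg by simp
qed

lemma rst_comp_total: "tgt f = src g \<Longrightarrow> rst g = ide (src g) \<Longrightarrow> rst (f ;; g) = rst f"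
  using rst_comp_rst[of f g] by simp

lemma rst_comp_rst_rst:
  "tgt x = src a \<Longrightarrow> tgt x = src b \<Longrightarrow>
   rst (x ;; rst a) ;; rst (x ;; rst b) = rst (x ;; rst a ;; rst b)"
proof -
  assume a: "tgt x = src a" "tgt x = src b"
  have "rst (x ;; rst a) ;; rst (x ;; rst b) = rst (rst (x ;; rst a) ;; (x ;; rst b))"
    using a by (simp add: rst_rst_comp)
  also have "rst (x ;; rst a) ;; (x ;; rst b) = (rst (x ;; rst a) ;; x) ;; rst b" using a by simp
  also have "rst (x ;; rst a) ;; x = x ;; rst a" using comp_rst[of x "rst a"] a by simp
  finally show ?thesis using a by simp
qed

definition dom_le :: "'m \<Rightarrow> 'm \<Rightarrow> bool" where
  "dom_le x a \<longleftrightarrow> rst x ;; rst a = rst x"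

lemma dom_le_refl[simp]: "dom_le x x"
  by (simp add: dom_le_def)

lemma dom_le_rst[simp]: "dom_le x (rst a) = dom_le x a" "dom_le (rst x) a = dom_le x a"
  by (simp_all add: dom_le_def)

lemma dom_le_rst_eq: "rst x = rst y \<Longrightarrow> dom_le x a = dom_le y a"
  by (simp add: dom_le_def)

lemma dom_le_trans:
  "dom_le x a \<Longrightarrow> dom_le a b \<Longrightarrow> src x = src a \<Longrightarrow> src a = src b \<Longrightarrow> dom_le x b"
  unfolding dom_le_def by (metis comp_assoc src_rst tgt_rst)

lemma dom_le_comp: "tgt f = src h \<Longrightarrow> dom_le (f ;; h) f"
  unfolding dom_le_def
  by (metis rst_commute rst_comp_self_assoc rst_rst_comp src_comp)

lemma dom_le_absorb: "dom_le x e \<Longrightarrow> src e = src x \<Longrightarrow> rst e ;; x = x"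
  unfolding dom_le_def by (metis comp_assoc rst_commute rst_comp_self src_rst tgt_rst)

lemma dom_le_meet:
  "dom_le x a \<Longrightarrow> dom_le x b \<Longrightarrow> src a = src b \<Longrightarrow> src x = src a \<Longrightarrow> dom_le x (rst a ;; b)"
  unfolding dom_le_def by (simp add: rst_rst_comp flip: comp_assoc)

abbreviation iter where "iter \<equiv> mpow C"

lemma iter_hom[simp]:
  "src m = X \<Longrightarrow> tgt m = X \<Longrightarrow> src (iter X m i) = X"
  "src m = X \<Longrightarrow> tgt m = X \<Longrightarrow> tgt (iter X m i) = X"
  by (induction i) simp_all

lemma iter_add: "src m = X \<Longrightarrow> tgt m = X \<Longrightarrow> iter X m (i + n) = iter X m i ;; iter X m n"
  by (induction i) simp_all

lemma rle_iff: "rle C f g \<longleftrightarrow> src f = src g \<and> tgt f = tgt g \<and> rst f ;; g = f"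
  unfolding rle_def parallel_def by simp

lemma rle_antisym: "rle C f g \<Longrightarrow> rle C g f \<Longrightarrow> f = g"
proof -
  assume a: "rle C f g" "rle C g f"
  hence t: "src f = src g" "tgt f = tgt g" and e1: "rst f ;; g = f" and e2: "rst g ;; f = g"
    by (simp_all add: rle_iff)
  have "rst f = rst f ;; rst g" using e1 t rst_rst_comp[of f g] by simp
  moreover have "rst g = rst g ;; rst f" using e2 t rst_rst_comp[of g f] by simp
  ultimately have "rst f = rst g" using t rst_commute[of f g] by simp
  thus ?thesis using e1 by simp
qed

lemma join_unique: "is_join C X Y I fs j1 \<Longrightarrow> is_join C X Y I fs j2 \<Longrightarrow> j1 = j2"
  unfolding is_join_def by (blast intro: rle_antisym)

end

locale restriction_products = restriction_category C for C :: "('o, 'm) rcat" +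
  assumes restriction_products: "has_restriction_products C"
begin

abbreviation prd (infixr "\<Otimes>" 80) where "A \<Otimes> B \<equiv> c_prod C A B"
abbreviation pi0 ("\<pi>\<^sub>0") where "\<pi>\<^sub>0 \<equiv> c_pi0 C"
abbreviation pi1 ("\<pi>\<^sub>1") where "\<pi>\<^sub>1 \<equiv> c_pi1 C"
abbreviation pair ("\<langle>_,/ _\<rangle>") where "\<langle>f, g\<rangle> \<equiv> c_pair C f g"
abbreviation fprd (infixr "\<otimes>" 80) where "f \<otimes> g \<equiv> fprod C f g"

lemma pi_hom[simp]:
  "src (\<pi>\<^sub>0 A B) = A \<Otimes> B" "tgt (\<pi>\<^sub>0 A B) = A"
  "src (\<pi>\<^sub>1 A B) = A \<Otimes> B" "tgt (\<pi>\<^sub>1 A B) = B"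
  using restriction_products unfolding has_restriction_products_def hom_def by simp_all

lemma rst_pi[simp]: "rst (\<pi>\<^sub>0 A B) = ide (A \<Otimes> B)" "rst (\<pi>\<^sub>1 A B) = ide (A \<Otimes> B)"
  using restriction_products unfolding has_restriction_products_def hom_def total_def by simp_all

lemma pair_universal:
  assumes "hom C X A f" "hom C X B g"
  shows "hom C X (A \<Otimes> B) \<langle>f, g\<rangle> \<and>
    \<langle>f, g\<rangle> ;; \<pi>\<^sub>0 A B = rst g ;; f \<and> \<langle>f, g\<rangle> ;; \<pi>\<^sub>1 A B = rst f ;; g \<and>
    (\<forall>h. hom C X (A \<Otimes> B) h \<and> h ;; \<pi>\<^sub>0 A B = rst g ;; f \<and> h ;; \<pi>\<^sub>1 A B = rst f ;; g
       \<longrightarrow> h = \<langle>f, g\<rangle>)"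
proof -
  have "\<forall>X A B f g. hom C X A f \<and> hom C X B g \<longrightarrow> hom C X (A \<Otimes> B) \<langle>f, g\<rangle> \<and>
    \<langle>f, g\<rangle> ;; \<pi>\<^sub>0 A B = rst g ;; f \<and> \<langle>f, g\<rangle> ;; \<pi>\<^sub>1 A B = rst f ;; g \<and>
    (\<forall>h. hom C X (A \<Otimes> B) h \<and> h ;; \<pi>\<^sub>0 A B = rst g ;; f \<and> h ;; \<pi>\<^sub>1 A B = rst f ;; g
       \<longrightarrow> h = \<langle>f, g\<rangle>)"
    using restriction_products unfolding has_restriction_products_def by (elim conjE) assumption
  from this[rule_format, OF conjI[OF assms]] show ?thesis .
qed

lemma pair_hom[simp]:
  "src f = src g \<Longrightarrow> src \<langle>f, g\<rangle> = src f"
  "src f = src g \<Longrightarrow> tgt \<langle>f, g\<rangle> = tgt f \<Otimes> tgt g"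
  using pair_universal[of "src f" "tgt f" f "tgt g" g] by (simp_all add: hom_def)

lemma pair_pi0[simp]:
  "src f = X \<Longrightarrow> src g = X \<Longrightarrow> tgt f = A \<Longrightarrow> tgt g = B \<Longrightarrow> \<langle>f, g\<rangle> ;; \<pi>\<^sub>0 A B = rst g ;; f"
  and pair_pi1[simp]:
  "src f = X \<Longrightarrow> src g = X \<Longrightarrow> tgt f = A \<Longrightarrow> tgt g = B \<Longrightarrow> \<langle>f, g\<rangle> ;; \<pi>\<^sub>1 A B = rst f ;; g"
  using pair_universal[of X A f B g] by (simp_all add: hom_def)

lemma pair_unique:
  "src f = X \<Longrightarrow> src g = X \<Longrightarrow> tgt f = A \<Longrightarrow> tgt g = B \<Longrightarrow> src h = X \<Longrightarrow> tgt h = A \<Otimes> B \<Longrightarrow>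
   h ;; \<pi>\<^sub>0 A B = rst g ;; f \<Longrightarrow> h ;; \<pi>\<^sub>1 A B = rst f ;; g \<Longrightarrow> h = \<langle>f, g\<rangle>"
  using pair_universal[of X A f B g] by (simp add: hom_def)

lemma pair_pi0_assoc[simp]: "src f = X \<Longrightarrow> src g = X \<Longrightarrow> tgt f = A \<Longrightarrow> tgt g = B \<Longrightarrow> src h = A \<Longrightarrow>
   \<langle>f, g\<rangle> ;; (\<pi>\<^sub>0 A B ;; h) = rst g ;; (f ;; h)"
  by (subst comp_assoc[symmetric]) simp_all

lemma pair_pi1_assoc[simp]: "src f = X \<Longrightarrow> src g = X \<Longrightarrow> tgt f = A \<Longrightarrow> tgt g = B \<Longrightarrow> src h = B \<Longrightarrow>
   \<langle>f, g\<rangle> ;; (\<pi>\<^sub>1 A B ;; h) = rst f ;; (g ;; h)"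
  by (subst comp_assoc[symmetric]) simp_all

lemma rst_pair[simp]: "src f = src g \<Longrightarrow> rst \<langle>f, g\<rangle> = rst f ;; rst g"
proof -
  assume a: "src f = src g"
  have "rst \<langle>f, g\<rangle> = rst (\<langle>f, g\<rangle> ;; \<pi>\<^sub>0 (tgt f) (tgt g))"
    using a by (intro rst_comp_total[symmetric]) auto
  also have "\<dots> = rst g ;; rst f" using a by (simp add: rst_rst_comp)
  finally show ?thesis using a by (simp add: rst_commute)
qed

lemma pair_pi0_pi1[simp]: "\<langle>\<pi>\<^sub>0 A B, \<pi>\<^sub>1 A B\<rangle> = ide (A \<Otimes> B)"
  by (rule pair_unique[symmetric]) auto

lemma comp_rst_assoc: "tgt f = src g \<Longrightarrow> tgt f = src h \<Longrightarrow> f ;; (rst g ;; h) = rst (f ;; g) ;; (f ;; h)"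
proof -
  assume a: "tgt f = src g" "tgt f = src h"
  have "f ;; (rst g ;; h) = (f ;; rst g) ;; h" using a by (subst comp_assoc[symmetric]) simp_all
  also have "\<dots> = (rst (f ;; g) ;; f) ;; h" using a by (simp add: comp_rst)
  finally show ?thesis using a by simp
qed

lemma comp_pair: "tgt x = Y \<Longrightarrow> src f = Y \<Longrightarrow> src g = Y \<Longrightarrow> x ;; \<langle>f, g\<rangle> = \<langle>x ;; f, x ;; g\<rangle>"
proof -
  assume a: "tgt x = Y" "src f = Y" "src g = Y"
  show ?thesis
  proof (rule pair_unique[OF _ _ refl refl])
    show "(x ;; \<langle>f, g\<rangle>) ;; \<pi>\<^sub>0 (tgt (x ;; f)) (tgt (x ;; g)) = rst (x ;; g) ;; x ;; f"
      using a by (simp add: comp_rst_assoc)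
    show "(x ;; \<langle>f, g\<rangle>) ;; \<pi>\<^sub>1 (tgt (x ;; f)) (tgt (x ;; g)) = rst (x ;; f) ;; x ;; g"
      using a by (simp add: comp_rst_assoc)
  qed (use a in auto)
qed

lemma pair_rst_left: "src e = X \<Longrightarrow> src f = X \<Longrightarrow> src g = X \<Longrightarrow> \<langle>rst e ;; f, g\<rangle> = rst e ;; \<langle>f, g\<rangle>"
proof -
  assume a: "src e = X" "src f = X" "src g = X"
  show ?thesis
  proof (rule pair_unique[symmetric, OF _ _ refl refl])
    show "(rst e ;; \<langle>f, g\<rangle>) ;; \<pi>\<^sub>0 (tgt (rst e ;; f)) (tgt g) = rst g ;; rst e ;; f"
      using a by (simp add: rst_left_commute)
    show "(rst e ;; \<langle>f, g\<rangle>) ;; \<pi>\<^sub>1 (tgt (rst e ;; f)) (tgt g) = rst (rst e ;; f) ;; g"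
      using a by (simp add: rst_rst_comp)
  qed (use a in auto)
qed

lemma pair_rst_right: "src e = X \<Longrightarrow> src f = X \<Longrightarrow> src g = X \<Longrightarrow> \<langle>f, rst e ;; g\<rangle> = rst e ;; \<langle>f, g\<rangle>"
proof -
  assume a: "src e = X" "src f = X" "src g = X"
  show ?thesis
  proof (rule pair_unique[symmetric, OF _ _ refl refl])
    show "(rst e ;; \<langle>f, g\<rangle>) ;; \<pi>\<^sub>1 (tgt f) (tgt (rst e ;; g)) = rst f ;; rst e ;; g"
      using a by (simp add: rst_left_commute)
    show "(rst e ;; \<langle>f, g\<rangle>) ;; \<pi>\<^sub>0 (tgt f) (tgt (rst e ;; g)) = rst (rst e ;; g) ;; f"
      using a by (simp add: rst_rst_comp rst_left_commute)
  qed (use a in auto)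
qed

lemma dom_le_pair_left: "src f = src g \<Longrightarrow> dom_le \<langle>f, g\<rangle> f"
  unfolding dom_le_def by (simp add: rst_commute[of g f])

lemma dom_le_pair_right: "src f = src g \<Longrightarrow> dom_le \<langle>f, g\<rangle> g"
  unfolding dom_le_def by simp

lemma fprod_eq: "f \<otimes> g = \<langle>\<pi>\<^sub>0 (src f) (src g) ;; f, \<pi>\<^sub>1 (src f) (src g) ;; g\<rangle>"
  by (simp add: fprod_def)

lemma fprod_hom[simp]: "src (f \<otimes> g) = src f \<Otimes> src g" "tgt (f \<otimes> g) = tgt f \<Otimes> tgt g"
  by (simp_all add: fprod_eq)

lemma pair_comp_fprod: "src f = X \<Longrightarrow> src g = X \<Longrightarrow> tgt f = A \<Longrightarrow> tgt g = B \<Longrightarrow> src h = A \<Longrightarrow> src k = B \<Longrightarrow>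
  \<langle>f, g\<rangle> ;; (h \<otimes> k) = \<langle>f ;; h, g ;; k\<rangle>"
proof -
  assume a: "src f = X" "src g = X" "tgt f = A" "tgt g = B" "src h = A" "src k = B"
  have "\<langle>f, g\<rangle> ;; (h \<otimes> k) = \<langle>rst g ;; (f ;; h), rst f ;; (g ;; k)\<rangle>"
    using a by (simp add: fprod_eq comp_pair[of _ "A \<Otimes> B"])
  also have "\<dots> = rst f ;; (rst g ;; \<langle>f ;; h, g ;; k\<rangle>)"
    using a by (simp add: pair_rst_left[of _ X] pair_rst_right[of _ X])
  also have "\<dots> = \<langle>f ;; h, g ;; k\<rangle>"
  proof -
    have "dom_le \<langle>f ;; h, g ;; k\<rangle> f" "dom_le \<langle>f ;; h, g ;; k\<rangle> g"
      using a by (intro dom_le_trans[OF dom_le_pair_left dom_le_comp]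
          dom_le_trans[OF dom_le_pair_right dom_le_comp]; simp)+
    then show ?thesis using a by (simp add: dom_le_absorb)
  qed
  finally show ?thesis .
qed

lemma pair_comp_fprod_assoc:
  "src f = X \<Longrightarrow> src g = X \<Longrightarrow> tgt f = A \<Longrightarrow> tgt g = B \<Longrightarrow> src h = A \<Longrightarrow> src k = B \<Longrightarrow>
  src y = (tgt h \<Otimes> tgt k) \<Longrightarrow> \<langle>f, g\<rangle> ;; ((h \<otimes> k) ;; y) = \<langle>f ;; h, g ;; k\<rangle> ;; y"
  by (subst comp_assoc[symmetric]) (simp_all add: pair_comp_fprod)

lemma fprod_pi0_total:
  "rst k = ide (src k) \<Longrightarrow> tgt h = A \<Longrightarrow> tgt k = B \<Longrightarrow> (h \<otimes> k) ;; \<pi>\<^sub>0 A B = \<pi>\<^sub>0 (src h) (src k) ;; h"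
  by (simp add: fprod_eq rst_comp_total)

lemma fprod_pi1_total:
  "rst h = ide (src h) \<Longrightarrow> tgt h = A \<Longrightarrow> tgt k = B \<Longrightarrow> (h \<otimes> k) ;; \<pi>\<^sub>1 A B = \<pi>\<^sub>1 (src h) (src k) ;; k"
  by (simp add: fprod_eq rst_comp_total)

lemma fprod_pi0_total_assoc:
  "rst k = ide (src k) \<Longrightarrow> tgt h = A \<Longrightarrow> tgt k = B \<Longrightarrow> src y = A \<Longrightarrow>
   (h \<otimes> k) ;; (\<pi>\<^sub>0 A B ;; y) = \<pi>\<^sub>0 (src h) (src k) ;; (h ;; y)"
  by (subst comp_assoc[symmetric]) (simp_all add: fprod_pi0_total)

lemma fprod_ide[simp]: "ide A \<otimes> ide B = ide (A \<Otimes> B)"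
  by (simp add: fprod_eq)

lemma fprod_comp: "tgt f = src h \<Longrightarrow> tgt g = src k \<Longrightarrow> (f \<otimes> g) ;; (h \<otimes> k) = (f ;; h) \<otimes> (g ;; k)"
  by (simp add: fprod_eq[of f g] fprod_eq[of "f;;h"] pair_comp_fprod)

lemma fprod_rst_ide: "src u = A \<Longrightarrow> rst u \<otimes> ide B = rst (\<pi>\<^sub>0 A B ;; u)"
proof -
  assume a: "src u = A"
  have "rst u \<otimes> ide B = \<langle>\<pi>\<^sub>0 A B ;; rst u, \<pi>\<^sub>1 A B\<rangle>" using a by (simp add: fprod_eq)
  also have "\<pi>\<^sub>0 A B ;; rst u = rst (\<pi>\<^sub>0 A B ;; u) ;; \<pi>\<^sub>0 A B" using a by (simp add: comp_rst)
  also have "\<langle>rst (\<pi>\<^sub>0 A B ;; u) ;; \<pi>\<^sub>0 A B, \<pi>\<^sub>1 A B\<rangle> = rst (\<pi>\<^sub>0 A B ;; u)"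
    using a by (simp add: pair_rst_left[of _ "A \<Otimes> B"])
  finally show ?thesis .
qed

end

locale cartesian_left_additive =
  fixes C :: "('o, 'm) rcat"
  assumes cartesian_left_additive: "is_cartesian_left_additive C"

sublocale cartesian_left_additive \<subseteq> restriction_products
  using cartesian_left_additive unfolding is_cartesian_left_additive_def
  by unfold_locales blast+

context cartesian_left_additive
begin

abbreviation madd (infixl "\<oplus>" 65) where "f \<oplus> g \<equiv> c_plus C f g"
abbreviation mzero ("\<zero>") where "\<zero> \<equiv> c_zero C"
abbreviation inj0 ("\<iota>\<^sub>0") where "\<iota>\<^sub>0 \<equiv> iota0 C"
abbreviation inj1 ("\<iota>\<^sub>1") where "\<iota>\<^sub>1 \<equiv> iota1 C"

lemma plus_hom[simp]:
  "src f = A \<Longrightarrow> src g = A \<Longrightarrow> tgt f = B \<Longrightarrow> tgt g = B \<Longrightarrow> src (f \<oplus> g) = A"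
  "src f = A \<Longrightarrow> src g = A \<Longrightarrow> tgt f = B \<Longrightarrow> tgt g = B \<Longrightarrow> tgt (f \<oplus> g) = B"
  using cartesian_left_additive unfolding is_cartesian_left_additive_def hom_def
  by (elim conjE; simp only: simp_thms)+

lemma zero_hom[simp]: "src (\<zero> A B) = A" "tgt (\<zero> A B) = B"
  using cartesian_left_additive unfolding is_cartesian_left_additive_def hom_def
  by (elim conjE; simp only: simp_thms)+

lemma plus_comm: "src f = A \<Longrightarrow> src g = A \<Longrightarrow> tgt f = B \<Longrightarrow> tgt g = B \<Longrightarrow> f \<oplus> g = g \<oplus> f"
  using cartesian_left_additive unfolding is_cartesian_left_additive_def hom_def
  by (elim conjE) (simp only: simp_thms)

lemma plus_zero[simp]: "src f = A \<Longrightarrow> tgt f = B \<Longrightarrow> f \<oplus> \<zero> A B = f"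
  using cartesian_left_additive unfolding is_cartesian_left_additive_def hom_def
  by (elim conjE) (simp only: simp_thms)

lemma rst_plus[simp]:
  "src f = A \<Longrightarrow> src g = A \<Longrightarrow> tgt f = B \<Longrightarrow> tgt g = B \<Longrightarrow> rst (f \<oplus> g) = rst f ;; rst g"
  using cartesian_left_additive unfolding is_cartesian_left_additive_def hom_def
  by (elim conjE) (simp only: simp_thms)

lemma rst_zero[simp]: "rst (\<zero> A B) = ide A"
  using cartesian_left_additive unfolding is_cartesian_left_additive_def hom_def
  by (elim conjE) (simp only: simp_thms)

lemma comp_plus:
  "src x = X \<Longrightarrow> tgt x = A \<Longrightarrow> src f = A \<Longrightarrow> src g = A \<Longrightarrow> tgt f = B \<Longrightarrow> tgt g = B \<Longrightarrow>
   x ;; (f \<oplus> g) = (x ;; f) \<oplus> (x ;; g)"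
  using cartesian_left_additive unfolding is_cartesian_left_additive_def hom_def
  by (elim conjE) (simp only: simp_thms)

lemma comp_zero: "src x = X \<Longrightarrow> tgt x = A \<Longrightarrow> x ;; \<zero> A B = rst x ;; \<zero> X B"
  using cartesian_left_additive unfolding is_cartesian_left_additive_def hom_def
  by (elim conjE) (simp only: simp_thms)

lemma plus_comp_pi1:
  "src f = X \<Longrightarrow> src g = X \<Longrightarrow> tgt f = A \<Otimes> B \<Longrightarrow> tgt g = A \<Otimes> B \<Longrightarrow>
   (f \<oplus> g) ;; \<pi>\<^sub>1 A B = (f ;; \<pi>\<^sub>1 A B) \<oplus> (g ;; \<pi>\<^sub>1 A B)"
  using cartesian_left_additive unfolding is_cartesian_left_additive_def hom_def
  by (elim conjE) (simp only: simp_thms)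

lemma zero_comp_pi[simp]: "\<zero> X (A \<Otimes> B) ;; \<pi>\<^sub>0 A B = \<zero> X A" "\<zero> X (A \<Otimes> B) ;; \<pi>\<^sub>1 A B = \<zero> X B"
  using cartesian_left_additive unfolding is_cartesian_left_additive_def hom_def
  by (elim conjE; simp only: simp_thms)+

lemma zero_plus[simp]: "src f = A \<Longrightarrow> tgt f = B \<Longrightarrow> \<zero> A B \<oplus> f = f"
  using plus_comm[of "\<zero> A B" A f B] by simp

lemma iota0_eq: "\<iota>\<^sub>0 A B = \<langle>ide A, \<zero> A B\<rangle>" by (simp add: iota0_def)

lemma iota1_eq: "\<iota>\<^sub>1 A B = \<langle>\<zero> B A, ide B\<rangle>" by (simp add: iota1_def)

lemma iota_hom[simp]:
  "src (\<iota>\<^sub>0 A B) = A" "tgt (\<iota>\<^sub>0 A B) = A \<Otimes> B" "src (\<iota>\<^sub>1 A B) = B" "tgt (\<iota>\<^sub>1 A B) = A \<Otimes> B"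
  by (simp_all add: iota0_eq iota1_eq)

lemma rst_iota[simp]: "rst (\<iota>\<^sub>0 A B) = ide A" "rst (\<iota>\<^sub>1 A B) = ide B"
  by (simp_all add: iota0_eq iota1_eq)

lemma iota0_pi[simp]: "\<iota>\<^sub>0 A B ;; \<pi>\<^sub>0 A B = ide A" "\<iota>\<^sub>0 A B ;; \<pi>\<^sub>1 A B = \<zero> A B"
  by (simp_all add: iota0_eq)

lemma iota1_pi[simp]: "\<iota>\<^sub>1 A B ;; \<pi>\<^sub>0 A B = \<zero> B A" "\<iota>\<^sub>1 A B ;; \<pi>\<^sub>1 A B = ide B"
  by (simp_all add: iota1_eq)

lemma iota0_pi_assoc[simp]: "src h = A \<Longrightarrow> \<iota>\<^sub>0 A B ;; (\<pi>\<^sub>0 A B ;; h) = h"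
  "src h = B \<Longrightarrow> \<iota>\<^sub>0 A B ;; (\<pi>\<^sub>1 A B ;; h) = \<zero> A B ;; h"
  by (subst comp_assoc[symmetric]; simp)+

lemma comp_iota0: "src x = X \<Longrightarrow> tgt x = A \<Longrightarrow> x ;; \<iota>\<^sub>0 A B = \<langle>x, \<zero> X B\<rangle>"
proof -
  assume a: "src x = X" "tgt x = A"
  have "x ;; \<iota>\<^sub>0 A B = \<langle>x, rst x ;; \<zero> X B\<rangle>"
    using a by (simp add: iota0_eq comp_pair comp_zero[of x X A B])
  also have "\<dots> = \<langle>x, \<zero> X B\<rangle>"
    using a pair_rst_right[of x X x "\<zero> X B"] dom_le_absorb[OF dom_le_pair_left, of x "\<zero> X B"] by simp
  finally show ?thesis .
qed

lemma rst_zero_plus: "src e = X \<Longrightarrow> src v = X \<Longrightarrow> tgt v = B \<Longrightarrow> dom_le v e \<Longrightarrow> (rst e ;; \<zero> X B) \<oplus> v = v"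
proof -
  assume a: "src e = X" "src v = X" "tgt v = B" "dom_le v e"
  have v: "rst e ;; v = v" using a by (simp add: dom_le_absorb)
  have "(rst e ;; \<zero> X B) \<oplus> v = (rst e ;; \<zero> X B) \<oplus> (rst e ;; v)" using v by simp
  also have "\<dots> = rst e ;; (\<zero> X B \<oplus> v)" using a by (subst comp_plus[of _ X X]) simp_all
  also have "\<dots> = v" using a v by simp
  finally show ?thesis .
qed

lemma rst_rst_zero_plus:
  "src e1 = X \<Longrightarrow> src e2 = X \<Longrightarrow> src v = X \<Longrightarrow> tgt v = B \<Longrightarrow> dom_le v e1 \<Longrightarrow> dom_le v e2 \<Longrightarrow>
   (rst e1 ;; (rst e2 ;; \<zero> X B)) \<oplus> v = v"
proof -
  assume a: "src e1 = X" "src e2 = X" "src v = X" "tgt v = B" "dom_le v e1" "dom_le v e2"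
  have "rst e1 ;; (rst e2 ;; \<zero> X B) = rst (rst e1 ;; e2) ;; \<zero> X B"
    using a by (subst comp_assoc[symmetric]) (simp_all add: rst_rst_comp)
  moreover have "(rst (rst e1 ;; e2) ;; \<zero> X B) \<oplus> v = v"
    using a by (intro rst_zero_plus dom_le_meet) simp_all
  ultimately show ?thesis by simp
qed

end

locale reverse_differential =
  fixes C :: "('o, 'm) rcat"
  assumes reverse_differential: "is_rdrc C"

sublocale reverse_differential \<subseteq> cartesian_left_additive
  using reverse_differential unfolding is_rdrc_def by unfold_locales blast

context reverse_differential
begin

abbreviation R where "R \<equiv> c_R C"

lemma R_hom[simp]: "src (R f) = src f \<Otimes> tgt f" "tgt (R f) = src f"
proof -
  have "\<forall>A B f. hom C A B f \<longrightarrow> hom C (A \<Otimes> B) A (R f)"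
    using reverse_differential unfolding is_rdrc_def by (elim conjE)
  then show "src (R f) = src f \<Otimes> tgt f" "tgt (R f) = src f"
    unfolding hom_def by simp_all
qed

lemma pair_zero_comp_R:
  "src a = X \<Longrightarrow> tgt a = A \<Longrightarrow> src f = A \<Longrightarrow> tgt f = B \<Longrightarrow>
   \<langle>a, \<zero> X B\<rangle> ;; R f = rst (a ;; f) ;; \<zero> X A"
  using reverse_differential unfolding is_rdrc_def hom_def
  by (elim conjE) (simp only: simp_thms)

lemma R_pi[simp]:
  "R (\<pi>\<^sub>0 A B) = \<pi>\<^sub>1 (A \<Otimes> B) A ;; \<iota>\<^sub>0 A B" "R (\<pi>\<^sub>1 A B) = \<pi>\<^sub>1 (A \<Otimes> B) B ;; \<iota>\<^sub>1 A B"
  using reverse_differential unfolding is_rdrc_def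
  by (elim conjE; simp only: simp_thms)+

lemma R_pair:
  "src f = X \<Longrightarrow> src g = X \<Longrightarrow> tgt f = A \<Longrightarrow> tgt g = B \<Longrightarrow>
   R \<langle>f, g\<rangle> = ((ide X \<otimes> \<pi>\<^sub>0 A B) ;; R f) \<oplus> ((ide X \<otimes> \<pi>\<^sub>1 A B) ;; R g)"
  using reverse_differential unfolding is_rdrc_def hom_def
  by (elim conjE) (simp only: simp_thms)

lemma R_comp:
  "src f = A \<Longrightarrow> tgt f = B \<Longrightarrow> src g = B \<Longrightarrow> tgt g = E \<Longrightarrow>
   R (f ;; g) = \<langle>\<pi>\<^sub>0 A E, \<langle>\<pi>\<^sub>0 A E ;; f, \<pi>\<^sub>1 A E\<rangle> ;; R g\<rangle> ;; R f"
  using reverse_differential unfolding is_rdrc_def hom_def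
  by (elim conjE) (simp only: simp_thms)

lemma R_R_R:
  "src f = A \<Longrightarrow> tgt f = B \<Longrightarrow>
   \<langle>ide A \<otimes> \<pi>\<^sub>0 B B, \<zero> A A \<otimes> \<pi>\<^sub>1 B B\<rangle> ;;
     (((\<iota>\<^sub>0 (A \<Otimes> B) A \<otimes> ide (A \<Otimes> B)) ;; R (R (R f))) ;; \<pi>\<^sub>1 (A \<Otimes> B) A)
   = (ide A \<otimes> \<pi>\<^sub>1 B B) ;; R f"
  using reverse_differential unfolding is_rdrc_def hom_def
  by (elim conjE) (simp only: simp_thms)

lemma rst_R: "src f = A \<Longrightarrow> tgt f = B \<Longrightarrow> rst (R f) = rst f \<otimes> ide B"
  using reverse_differential unfolding is_rdrc_def hom_def
  by (elim conjE) (simp only: simp_thms)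

lemma R_rst: "src f = A \<Longrightarrow> R (rst f) = (rst f \<otimes> ide A) ;; \<pi>\<^sub>1 A A"
  using reverse_differential unfolding is_rdrc_def hom_def
  by (elim conjE) (simp only: simp_thms)

lemma rst_R_eq: "src f = A \<Longrightarrow> tgt f = B \<Longrightarrow> rst (R f) = rst (\<pi>\<^sub>0 A B ;; f)"
  by (simp add: rst_R fprod_rst_ide)

lemma R_rst_comp: "src u = A \<Longrightarrow> src g = A \<Longrightarrow> tgt g = B \<Longrightarrow> R (rst u ;; g) = rst (\<pi>\<^sub>0 A B ;; u) ;; R g"
proof -
  assume a: "src u = A" "src g = A" "tgt g = B"
  let ?e = "\<pi>\<^sub>0 A B ;; u"
  have "R (rst u ;; g) = \<langle>\<pi>\<^sub>0 A B, \<langle>\<pi>\<^sub>0 A B ;; rst u, \<pi>\<^sub>1 A B\<rangle> ;; R g\<rangle> ;; R (rst u)"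
    using a by (intro R_comp) simp_all
  also have "\<langle>\<pi>\<^sub>0 A B ;; rst u, \<pi>\<^sub>1 A B\<rangle> = (rst u \<otimes> ide B)" using a by (simp add: fprod_eq)
  also have "\<dots> = rst ?e" using a by (simp add: fprod_rst_ide)
  also have "R (rst u) = (rst u \<otimes> ide A) ;; \<pi>\<^sub>1 A A" using a by (simp add: R_rst)
  also have "\<langle>\<pi>\<^sub>0 A B, rst ?e ;; R g\<rangle> ;; ((rst u \<otimes> ide A) ;; \<pi>\<^sub>1 A A)
      = \<langle>\<pi>\<^sub>0 A B ;; rst u, rst ?e ;; R g\<rangle> ;; \<pi>\<^sub>1 A A"
    using a by (subst pair_comp_fprod_assoc) simp_all
  also have "\<dots> = rst (\<pi>\<^sub>0 A B ;; rst u) ;; (rst ?e ;; R g)"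
    using a by (subst pair_pi1) simp_all
  also have "\<dots> = rst ?e ;; R g" using a by (simp add: rst_comp_rst)
  finally show ?thesis .
qed

lemma rst_comp_pi_iota[simp]:
  "tgt f = A \<Otimes> B \<Longrightarrow> rst (f ;; \<pi>\<^sub>0 A B) = rst f"
  "tgt f = A \<Otimes> B \<Longrightarrow> rst (f ;; \<pi>\<^sub>1 A B) = rst f"
  "tgt f = A \<Longrightarrow> rst (f ;; \<iota>\<^sub>0 A B) = rst f"
  "tgt f = B \<Longrightarrow> rst (f ;; \<iota>\<^sub>1 A B) = rst f"
  by (simp_all add: rst_comp_total)

lemma fprod_ide_zero: "ide A \<otimes> \<zero> B E = \<pi>\<^sub>0 A B ;; \<iota>\<^sub>0 A E"
proof -
  have "ide A \<otimes> \<zero> B E = \<langle>\<pi>\<^sub>0 A B, \<pi>\<^sub>1 A B ;; \<zero> B E\<rangle>" by (simp add: fprod_eq)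
  also have "\<pi>\<^sub>1 A B ;; \<zero> B E = \<zero> (A \<Otimes> B) E" using comp_zero[of "\<pi>\<^sub>1 A B" "A \<Otimes> B" B E] by simp
  finally show ?thesis by (simp add: comp_iota0)
qed

lemma fprod_zero_ide: "\<zero> A E \<otimes> ide B = \<pi>\<^sub>1 A B ;; \<iota>\<^sub>1 E B"
proof -
  have "\<zero> A E \<otimes> ide B = \<langle>\<pi>\<^sub>0 A B ;; \<zero> A E, \<pi>\<^sub>1 A B\<rangle>" by (simp add: fprod_eq)
  also have "\<pi>\<^sub>0 A B ;; \<zero> A E = \<zero> (A \<Otimes> B) E" using comp_zero[of "\<pi>\<^sub>0 A B" "A \<Otimes> B" A E] by simp
  finally show ?thesis
    using comp_zero[of "\<pi>\<^sub>1 A B" "A \<Otimes> B" B E] by (simp add: iota1_eq comp_pair)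
qed

lemma iota0_comp_fprod_iota0: "\<iota>\<^sub>0 A E ;; (\<iota>\<^sub>0 A B \<otimes> ide E) = \<langle>\<iota>\<^sub>0 A B, \<zero> A E\<rangle>"
  by (simp add: fprod_eq comp_pair)

definition dagger :: "'o \<Rightarrow> 'o \<Rightarrow> 'm \<Rightarrow> 'm" where
  "dagger A B g = (\<iota>\<^sub>0 A B \<otimes> ide (tgt g)) ;; (R g ;; \<pi>\<^sub>1 A B)"

lemma pair_comp_dagger:
  "src a = X \<Longrightarrow> tgt a = A \<Longrightarrow> src w = X \<Longrightarrow> tgt w = tgt g \<Longrightarrow> src g = A \<Otimes> B \<Longrightarrow>
   \<langle>a ;; \<iota>\<^sub>0 A B, w\<rangle> ;; (R g ;; \<pi>\<^sub>1 A B) = \<langle>a, w\<rangle> ;; dagger A B g"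
  unfolding dagger_def by (simp add: pair_comp_fprod flip: comp_assoc)

lemma R_pi0_iota0_pi1: "R (\<pi>\<^sub>0 A B ;; \<iota>\<^sub>0 A E) ;; \<pi>\<^sub>1 A B = \<zero> ((A \<Otimes> B) \<Otimes> (A \<Otimes> E)) B"
proof -
  let ?Y = "\<langle>\<pi>\<^sub>0 (A \<Otimes> B) (A \<Otimes> E) ;; \<pi>\<^sub>0 A B, \<pi>\<^sub>1 (A \<Otimes> B) (A \<Otimes> E)\<rangle> ;; R (\<iota>\<^sub>0 A E)"
  have total: "rst ?Y = ide ((A \<Otimes> B) \<Otimes> (A \<Otimes> E))"
    by (subst rst_comp_total) (simp_all add: rst_R)
  have "R (\<pi>\<^sub>0 A B ;; \<iota>\<^sub>0 A E) = \<langle>\<pi>\<^sub>0 (A \<Otimes> B) (A \<Otimes> E), ?Y\<rangle> ;; R (\<pi>\<^sub>0 A B)"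
    by (rule R_comp) simp_all
  then have "R (\<pi>\<^sub>0 A B ;; \<iota>\<^sub>0 A E) ;; \<pi>\<^sub>1 A B = ?Y ;; \<zero> A B" by simp
  then show ?thesis using total comp_zero[of ?Y "(A \<Otimes> B) \<Otimes> (A \<Otimes> E)" A B] by simp
qed

text \<open>Only the second summand of RD.4 survives: the first one factors through R of the
  linear map \<open>\<pi>\<^sub>0 ;; \<iota>\<^sub>0\<close>, whose second component vanishes.\<close>
lemma pair_comp_R_iota0_fprod_ide:
  assumes "src a = X" "tgt a = A \<Otimes> B" "src n = X" "tgt n = (A \<Otimes> E) \<Otimes> B"
  shows "\<langle>a, n\<rangle> ;; (R (\<iota>\<^sub>0 A E \<otimes> ide B) ;; \<pi>\<^sub>1 A B) = rst a ;; (n ;; \<pi>\<^sub>1 (A \<Otimes> E) B)"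
proof -
  let ?S = "(ide (A \<Otimes> B) \<otimes> \<pi>\<^sub>0 (A \<Otimes> E) B) ;; R (\<pi>\<^sub>0 A B ;; \<iota>\<^sub>0 A E)"
  let ?T = "(ide (A \<Otimes> B) \<otimes> \<pi>\<^sub>1 (A \<Otimes> E) B) ;; R (\<pi>\<^sub>1 A B)"
  let ?n0 = "n ;; \<pi>\<^sub>0 (A \<Otimes> E) B" and ?n1 = "n ;; \<pi>\<^sub>1 (A \<Otimes> E) B"
  have "\<iota>\<^sub>0 A E \<otimes> ide B = \<langle>\<pi>\<^sub>0 A B ;; \<iota>\<^sub>0 A E, \<pi>\<^sub>1 A B\<rangle>"
    by (simp add: fprod_eq)
  then have "R (\<iota>\<^sub>0 A E \<otimes> ide B) = ?S \<oplus> ?T"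
    by (simp add: R_pair)
  then have "\<langle>a, n\<rangle> ;; (R (\<iota>\<^sub>0 A E \<otimes> ide B) ;; \<pi>\<^sub>1 A B) = (\<langle>a, n\<rangle> ;; (?S \<oplus> ?T)) ;; \<pi>\<^sub>1 A B"
    using assms by (subst comp_assoc) simp_all
  also have "\<dots> = ((\<langle>a, n\<rangle> ;; ?S) ;; \<pi>\<^sub>1 A B) \<oplus> ((\<langle>a, n\<rangle> ;; ?T) ;; \<pi>\<^sub>1 A B)"
    using assms
    by (subst comp_plus[of _ X "(A \<Otimes> B) \<Otimes> ((A \<Otimes> E) \<Otimes> B)" _ _ "A \<Otimes> B"])
      (simp_all add: plus_comp_pi1 del: R_pi)
  also have "(\<langle>a, n\<rangle> ;; ?S) ;; \<pi>\<^sub>1 A B = rst \<langle>a, ?n0\<rangle> ;; \<zero> X B"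
    using assms comp_zero[of "\<langle>a, ?n0\<rangle>" X "(A \<Otimes> B) \<Otimes> (A \<Otimes> E)" B]
    by (simp add: pair_comp_fprod_assoc R_pi0_iota0_pi1)
  also have "(\<langle>a, n\<rangle> ;; ?T) ;; \<pi>\<^sub>1 A B = rst a ;; ?n1"
    using assms by (simp add: pair_comp_fprod_assoc)
  also have "(rst \<langle>a, ?n0\<rangle> ;; \<zero> X B) \<oplus> (rst a ;; ?n1) = rst a ;; ?n1"
    using assms
    by (intro rst_zero_plus) (simp_all add: dom_le_rst_eq[of _ "\<langle>a, ?n0\<rangle>"] rst_rst_comp rst_comp_total)
  finally show ?thesis .
qed

lemma R_R_R_iota:
  assumes "src f = A" "tgt f = B"
  shows "\<langle>\<pi>\<^sub>0 A B ;; (\<iota>\<^sub>0 A A ;; (\<iota>\<^sub>0 A B \<otimes> ide A)), \<pi>\<^sub>1 A B ;; \<iota>\<^sub>1 A B\<rangle> ;;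
      (R (R (R f)) ;; \<pi>\<^sub>1 (A \<Otimes> B) A) = R f"
proof -
  let ?L = "\<langle>ide A \<otimes> \<pi>\<^sub>0 B B, \<zero> A A \<otimes> \<pi>\<^sub>1 B B\<rangle>"
  let ?Z = "(\<iota>\<^sub>0 (A \<Otimes> B) A \<otimes> ide (A \<Otimes> B)) ;; (R (R (R f)) ;; \<pi>\<^sub>1 (A \<Otimes> B) A)"
  have "(ide A \<otimes> \<iota>\<^sub>1 B B) ;; (?L ;; ?Z) = (ide A \<otimes> \<iota>\<^sub>1 B B) ;; ((ide A \<otimes> \<pi>\<^sub>1 B B) ;; R f)"
    using R_R_R[OF assms] assms by simp
  also have "\<dots> = R f"
    using assms by (simp add: fprod_comp flip: comp_assoc)
  finally have "(ide A \<otimes> \<iota>\<^sub>1 B B) ;; (?L ;; ?Z) = R f" .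
  moreover have "(ide A \<otimes> \<iota>\<^sub>1 B B) ;; ?L = \<langle>ide A \<otimes> \<zero> B B, \<zero> A A \<otimes> ide B\<rangle>"
    by (simp add: comp_pair fprod_comp)
  ultimately have "\<langle>ide A \<otimes> \<zero> B B, \<zero> A A \<otimes> ide B\<rangle> ;; ?Z = R f"
    using assms by (simp flip: comp_assoc)
  moreover have "(ide A \<otimes> \<zero> B B) ;; \<iota>\<^sub>0 (A \<Otimes> B) A = \<pi>\<^sub>0 A B ;; (\<iota>\<^sub>0 A A ;; (\<iota>\<^sub>0 A B \<otimes> ide A))"
    by (simp add: fprod_ide_zero iota0_comp_fprod_iota0 comp_iota0[of "\<iota>\<^sub>0 A B" A])
  ultimately show ?thesis
    using assms by (simp add: pair_comp_fprod_assoc fprod_zero_ide)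
qed

lemma R_comp_pi1:
  assumes "src m = X" "tgt m = A \<Otimes> B"
  shows "R (m ;; \<pi>\<^sub>1 A B) = rst (\<pi>\<^sub>0 X B ;; m) ;; ((ide X \<otimes> \<iota>\<^sub>1 A B) ;; R m)"
proof -
  let ?e = "\<pi>\<^sub>0 X B ;; m"
  have "R (m ;; \<pi>\<^sub>1 A B) = \<langle>\<pi>\<^sub>0 X B, \<langle>?e, \<pi>\<^sub>1 X B\<rangle> ;; R (\<pi>\<^sub>1 A B)\<rangle> ;; R m"
    by (rule R_comp) (simp_all add: assms)
  also have "\<langle>?e, \<pi>\<^sub>1 X B\<rangle> ;; R (\<pi>\<^sub>1 A B) = rst ?e ;; (\<pi>\<^sub>1 X B ;; \<iota>\<^sub>1 A B)"
    using assms by (simp del: comp_assoc)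
  also have "\<langle>\<pi>\<^sub>0 X B, rst ?e ;; (\<pi>\<^sub>1 X B ;; \<iota>\<^sub>1 A B)\<rangle> = rst ?e ;; (ide X \<otimes> \<iota>\<^sub>1 A B)"
    using assms by (simp add: pair_rst_right[of _ "X \<Otimes> B"] fprod_eq)
  finally show ?thesis using assms by simp
qed

lemma iota0_comp_fprod_iota0_R_R:
  "src f = A \<Longrightarrow> tgt f = B \<Longrightarrow>
   \<iota>\<^sub>0 A A ;; ((\<iota>\<^sub>0 A B \<otimes> ide A) ;; R (R f)) = rst f ;; \<zero> A (A \<Otimes> B)"
proof -
  assume f: "src f = A" "tgt f = B"
  have "\<iota>\<^sub>0 A A ;; ((\<iota>\<^sub>0 A B \<otimes> ide A) ;; R (R f)) = \<langle>\<iota>\<^sub>0 A B, \<zero> A A\<rangle> ;; R (R f)"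
    using f by (simp add: iota0_comp_fprod_iota0 flip: comp_assoc)
  also have "\<dots> = rst (\<iota>\<^sub>0 A B ;; R f) ;; \<zero> A (A \<Otimes> B)"
    using f by (subst pair_zero_comp_R) simp_all
  also have "\<iota>\<^sub>0 A B ;; R f = rst f ;; \<zero> A A"
    using f by (simp add: iota0_eq pair_zero_comp_R)
  finally show ?thesis using f by (simp add: rst_rst_comp)
qed

lemma fwdD_hom[simp]:
  "src f = A \<Longrightarrow> tgt f = B \<Longrightarrow> src (fwdD C A B f) = A \<Otimes> A"
  "src f = A \<Longrightarrow> tgt f = B \<Longrightarrow> tgt (fwdD C A B f) = B"
  by (simp_all add: fwdD_def)

text \<open>This is RD.6
  once the zero tangent vectors introduced by \<open>\<iota>\<^sub>0\<close> are cancelled.\<close>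
lemma dagger_fwdD:
  assumes f: "src f = A" "tgt f = A"
  shows "dagger A A (fwdD C A A f) = R f"
proof -
  let ?Q = "\<iota>\<^sub>0 A A \<otimes> ide A" and ?i = "\<iota>\<^sub>0 A A" and ?j = "\<iota>\<^sub>1 A A"
  let ?M = "?Q ;; R (R f)"
  let ?e = "\<pi>\<^sub>0 (A \<Otimes> A) A ;; ?M"
  let ?X = "\<langle>\<pi>\<^sub>0 (A \<Otimes> A) (A \<Otimes> A) ;; ?Q, \<pi>\<^sub>1 (A \<Otimes> A) (A \<Otimes> A)\<rangle> ;; R (R (R f))"
  let ?N = "\<langle>\<pi>\<^sub>0 A A ;; (?i ;; ?Q), \<pi>\<^sub>1 A A ;; ?j\<rangle> ;; R (R (R f))"
  let ?tail = "\<langle>\<pi>\<^sub>0 (A \<Otimes> A) (A \<Otimes> A), ?X\<rangle> ;; (R ?Q ;; \<pi>\<^sub>1 A A)"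
  have RM: "R ?M = \<langle>\<pi>\<^sub>0 (A \<Otimes> A) (A \<Otimes> A), ?X\<rangle> ;; R ?Q"
    by (rule R_comp) (simp_all add: f)
  have "fwdD C A A f = ?M ;; \<pi>\<^sub>1 A A"
    unfolding fwdD_def using f by simp
  then have "R (fwdD C A A f) = rst ?e ;; ((ide (A \<Otimes> A) \<otimes> ?j) ;; R ?M)"
    using f by (simp only:) (rule R_comp_pi1, simp_all)
  then have "dagger A A (fwdD C A A f) = ?Q ;; (rst ?e ;; ((ide (A \<Otimes> A) \<otimes> ?j) ;; ?tail))"
    unfolding dagger_def using f by (simp add: RM)
  also have "\<dots> = rst (?Q ;; ?e) ;; (?Q ;; ((ide (A \<Otimes> A) \<otimes> ?j) ;; ?tail))"
    using f by (subst comp_rst_assoc) simp_all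
  also have "?Q ;; ((ide (A \<Otimes> A) \<otimes> ?j) ;; ?tail) = (?i \<otimes> ?j) ;; ?tail"
    using f by (subst comp_assoc[symmetric]) (simp_all add: fprod_comp)
  also have "(?i \<otimes> ?j) ;; ?tail = \<langle>\<pi>\<^sub>0 A A ;; ?i, ?N\<rangle> ;; (R ?Q ;; \<pi>\<^sub>1 A A)"
    using f
    by (simp add: comp_pair[of _ "(A \<Otimes> A) \<Otimes> (A \<Otimes> A)"] fprod_pi0_total fprod_pi1_total
        flip: comp_assoc)
  also have "\<dots> = ?N ;; \<pi>\<^sub>1 (A \<Otimes> A) A"
    using f by (subst pair_comp_R_iota0_fprod_ide) simp_all
  also have "\<dots> = R f"
    using f R_R_R_iota[OF f] by simp
  also have "rst (?Q ;; ?e) = rst (R f)"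
  proof -
    have "?Q ;; ?e = \<pi>\<^sub>0 A A ;; (rst f ;; \<zero> A (A \<Otimes> A))"
      using f by (simp add: fprod_pi0_total_assoc iota0_comp_fprod_iota0_R_R)
    moreover have "rst ((\<pi>\<^sub>0 A A ;; rst f) ;; \<zero> A (A \<Otimes> A)) = rst (\<pi>\<^sub>0 A A ;; rst f)"
      using f by (intro rst_comp_total) simp_all
    ultimately show ?thesis using f by (simp add: rst_comp_rst rst_R_eq)
  qed
  finally show ?thesis by simp
qed

lemma tanT_eq: "tanT C A f = \<langle>\<pi>\<^sub>0 A A ;; f, fwdD C A A f\<rangle>"
  by (simp add: tanT_def)

lemma iota0_comp_fwdD: "src f = A \<Longrightarrow> tgt f = B \<Longrightarrow> \<iota>\<^sub>0 A A ;; fwdD C A B f = rst f ;; \<zero> A B"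
proof -
  assume f: "src f = A" "tgt f = B"
  then have "\<iota>\<^sub>0 A A ;; fwdD C A B f = (\<iota>\<^sub>0 A A ;; ((\<iota>\<^sub>0 A B \<otimes> ide A) ;; R (R f))) ;; \<pi>\<^sub>1 A B"
    by (simp add: fwdD_def)
  then show ?thesis using f by (simp add: iota0_comp_fprod_iota0_R_R)
qed

lemma iota0_comp_guarded_tanT:
  assumes "src f = A" "tgt f = A" "src b = A"
  shows "\<iota>\<^sub>0 A A ;; (rst (\<pi>\<^sub>0 A A ;; b) ;; tanT C A f) = rst b ;; (f ;; \<iota>\<^sub>0 A A)"
proof -
  have "\<iota>\<^sub>0 A A ;; tanT C A f = \<langle>f, rst f ;; \<zero> A A\<rangle>"
    using assms by (simp add: tanT_eq comp_pair iota0_comp_fwdD)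
  also have "\<dots> = f ;; \<iota>\<^sub>0 A A"
    using assms pair_rst_right[of f A f "\<zero> A A"] dom_le_absorb[OF dom_le_pair_left, of f "\<zero> A A"]
    by (simp add: comp_iota0)
  finally show ?thesis
    using assms by (subst comp_rst_assoc) (simp_all add: tanT_eq)
qed

lemma rst_pair_comp_R:
  "src b = X \<Longrightarrow> src w = X \<Longrightarrow> tgt b = A \<Longrightarrow> tgt w = B \<Longrightarrow> src f = A \<Longrightarrow> tgt f = B \<Longrightarrow>
   rst (\<langle>b, w\<rangle> ;; R f) = rst (b ;; f) ;; rst w"
proof -
  assume a: "src b = X" "src w = X" "tgt b = A" "tgt w = B" "src f = A" "tgt f = B"
  have "rst (\<langle>b, w\<rangle> ;; R f) = rst (\<langle>b, w\<rangle> ;; rst (R f))" using a by (simp add: rst_comp_rst)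
  also have "\<dots> = rst \<langle>b ;; rst f, w\<rangle>" using a by (simp add: rst_R pair_comp_fprod)
  also have "\<dots> = rst (b ;; f) ;; rst w" using a by (simp add: rst_comp_rst)
  finally show ?thesis .
qed

lemma R_pi0_comp_pi1:
  assumes "src f = A" "tgt f = B"
  shows "R (\<pi>\<^sub>0 A E ;; f) ;; \<pi>\<^sub>1 A E = rst ((\<pi>\<^sub>0 A E \<otimes> ide B) ;; R f) ;; \<zero> ((A \<Otimes> E) \<Otimes> B) E"
proof -
  let ?Y = "(\<pi>\<^sub>0 A E \<otimes> ide B) ;; R f"
  have "R (\<pi>\<^sub>0 A E ;; f) = \<langle>\<pi>\<^sub>0 (A \<Otimes> E) B, ?Y\<rangle> ;; R (\<pi>\<^sub>0 A E)"
    using assms by (subst R_comp[of _ "A \<Otimes> E" A _ B]) (simp_all add: fprod_eq)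
  then have "R (\<pi>\<^sub>0 A E ;; f) ;; \<pi>\<^sub>1 A E = ?Y ;; \<zero> A E"
    using assms by simp
  then show ?thesis
    using assms comp_zero[of ?Y "(A \<Otimes> E) \<Otimes> B" A E] by simp
qed

text \<open>At points \<open>(a, 0)\<close> of the tangent bundle the component \<open>\<pi>\<^sub>0 f\<close> of the tangent map
  contributes nothing to the second component of its reverse derivative, and the component
  \<open>D[f]\<close> contributes \<open>R[f]\<close> by \<open>dagger_fwdD\<close>.\<close>
lemma pair_iota0_comp_R_guarded_tanT:
  assumes a: "src a = X" "tgt a = A" "src z = X" "tgt z = A \<Otimes> A"
    and f: "src f = A" "tgt f = A" "src b = A"
  shows "\<langle>a ;; \<iota>\<^sub>0 A A, z\<rangle> ;; (R (rst (\<pi>\<^sub>0 A A ;; b) ;; tanT C A f) ;; \<pi>\<^sub>1 A A)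
    = rst (a ;; b) ;; (\<langle>a, z ;; \<pi>\<^sub>1 A A\<rangle> ;; R f)"
proof -
  let ?i = "\<iota>\<^sub>0 A A" and ?pz = "\<langle>a ;; \<iota>\<^sub>0 A A, z\<rangle>"
  let ?e = "\<pi>\<^sub>0 (A \<Otimes> A) (A \<Otimes> A) ;; (\<pi>\<^sub>0 A A ;; b)"
  let ?S = "(ide (A \<Otimes> A) \<otimes> \<pi>\<^sub>0 A A) ;; R (\<pi>\<^sub>0 A A ;; f)"
  let ?U = "(ide (A \<Otimes> A) \<otimes> \<pi>\<^sub>1 A A) ;; R (fwdD C A A f)"
  let ?u = "\<langle>a ;; ?i, z ;; \<pi>\<^sub>0 A A\<rangle>"
  let ?v = "\<langle>a, z ;; \<pi>\<^sub>1 A A\<rangle> ;; R f"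
  have "R (rst (\<pi>\<^sub>0 A A ;; b) ;; tanT C A f) = rst ?e ;; R (tanT C A f)"
    using f by (subst R_rst_comp) (simp_all add: tanT_eq)
  also have "R (tanT C A f) = ?S \<oplus> ?U"
    unfolding tanT_eq using f by (subst R_pair) simp_all
  finally have "?pz ;; (R (rst (\<pi>\<^sub>0 A A ;; b) ;; tanT C A f) ;; \<pi>\<^sub>1 A A)
      = ?pz ;; (rst ?e ;; ((?S \<oplus> ?U) ;; \<pi>\<^sub>1 A A))"
    using a f by simp
  also have "\<dots> = rst (?pz ;; ?e) ;; ((?pz ;; (?S \<oplus> ?U)) ;; \<pi>\<^sub>1 A A)"
    using a f by (subst comp_rst_assoc) simp_all
  also have "rst (?pz ;; ?e) = rst z ;; rst (a ;; b)"
    using a f by (simp add: rst_rst_comp)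
  also have "(?pz ;; (?S \<oplus> ?U)) ;; \<pi>\<^sub>1 A A = ((?pz ;; ?S) ;; \<pi>\<^sub>1 A A) \<oplus> ((?pz ;; ?U) ;; \<pi>\<^sub>1 A A)"
    using a f
    by (subst comp_plus[of _ X "(A \<Otimes> A) \<Otimes> (A \<Otimes> A)" _ _ "A \<Otimes> A"]) (simp_all add: plus_comp_pi1)
  also have "(?pz ;; ?U) ;; \<pi>\<^sub>1 A A = ?v"
    using a f by (simp add: pair_comp_fprod_assoc pair_comp_dagger dagger_fwdD)
  also have "(?pz ;; ?S) ;; \<pi>\<^sub>1 A A = ?u ;; (rst ((\<pi>\<^sub>0 A A \<otimes> ide A) ;; R f) ;; \<zero> ((A \<Otimes> A) \<Otimes> A) A)"
    using a f by (simp add: pair_comp_fprod_assoc R_pi0_comp_pi1)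
  also have "\<dots> = rst (?u ;; ((\<pi>\<^sub>0 A A \<otimes> ide A) ;; R f)) ;; (?u ;; \<zero> ((A \<Otimes> A) \<Otimes> A) A)"
    using a f by (subst comp_rst_assoc) simp_all
  also have "?u ;; ((\<pi>\<^sub>0 A A \<otimes> ide A) ;; R f) = \<langle>a, z ;; \<pi>\<^sub>0 A A\<rangle> ;; R f"
    using a f by (subst comp_assoc[symmetric]) (simp_all add: pair_comp_fprod)
  also have "?u ;; \<zero> ((A \<Otimes> A) \<Otimes> A) A = rst ?u ;; \<zero> X A"
    using a comp_zero[of ?u X "(A \<Otimes> A) \<Otimes> A" A] by simp
  also have "(rst (\<langle>a, z ;; \<pi>\<^sub>0 A A\<rangle> ;; R f) ;; (rst ?u ;; \<zero> X A)) \<oplus> ?v = ?v"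
  proof (rule rst_rst_zero_plus)
    have "rst (\<langle>a, z ;; \<pi>\<^sub>0 A A\<rangle> ;; R f) = rst ?v"
      using a f by (simp add: rst_pair_comp_R[of _ X])
    then show "dom_le ?v (\<langle>a, z ;; \<pi>\<^sub>0 A A\<rangle> ;; R f)"
      by (simp add: dom_le_def)
    have "dom_le ?v \<langle>a, z ;; \<pi>\<^sub>1 A A\<rangle>" using a f by (intro dom_le_comp) simp
    then show "dom_le ?v ?u" using a by (simp add: dom_le_def)
  qed (use a f in simp_all)
  also have "(rst z ;; rst (a ;; b)) ;; ?v = rst (a ;; b) ;; ?v"
  proof -
    have "dom_le ?v z"
      using a f by (intro dom_le_trans[OF dom_le_comp dom_le_trans[OF dom_le_pair_right dom_le_comp]])
        simp_all
    then show ?thesis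
      using a f dom_le_absorb[of ?v z] rst_left_commute[of z "a ;; b" ?v] by simp
  qed
  finally show ?thesis .
qed

lemma dagger_guarded_tanT_comp:
  assumes f: "src f = A" "tgt f = A" "src b = A"
    and g: "src g = A" "tgt g = A" "src y = A \<Otimes> A" "tgt y = A"
    and dagger_y: "dagger A A y = R g"
  shows "dagger A A ((rst (\<pi>\<^sub>0 A A ;; b) ;; tanT C A f) ;; y) = R ((rst b ;; f) ;; g)"
proof -
  let ?k = "rst (\<pi>\<^sub>0 A A ;; b) ;; tanT C A f" and ?h = "rst b ;; f"
  let ?Q = "\<iota>\<^sub>0 A A \<otimes> ide A" and ?i = "\<iota>\<^sub>0 A A"
  let ?Z = "\<langle>\<pi>\<^sub>0 (A \<Otimes> A) A ;; ?k, \<pi>\<^sub>1 (A \<Otimes> A) A\<rangle> ;; R y"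
  let ?z = "(?h \<otimes> ide A) ;; (?Q ;; R y)"
  let ?w = "(?h \<otimes> ide A) ;; R g"
  have k: "src ?k = A \<Otimes> A" "tgt ?k = A \<Otimes> A" using f by (simp_all add: tanT_eq)
  have "R (?k ;; y) = \<langle>\<pi>\<^sub>0 (A \<Otimes> A) A, ?Z\<rangle> ;; R ?k"
    using g k by (intro R_comp) simp_all
  moreover have "dagger A A (?k ;; y) = ?Q ;; (R (?k ;; y) ;; \<pi>\<^sub>1 A A)"
    unfolding dagger_def using g k by simp
  ultimately have "dagger A A (?k ;; y) = (?Q ;; \<langle>\<pi>\<^sub>0 (A \<Otimes> A) A, ?Z\<rangle>) ;; (R ?k ;; \<pi>\<^sub>1 A A)"
    using g k by simp
  also have "?Q ;; \<langle>\<pi>\<^sub>0 (A \<Otimes> A) A, ?Z\<rangle> = \<langle>\<pi>\<^sub>0 A A ;; ?i, ?Q ;; ?Z\<rangle>"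
    using g k by (simp add: comp_pair[of _ "(A \<Otimes> A) \<Otimes> A"] fprod_pi0_total)
  also have "?Q ;; ?Z = ?z"
  proof -
    have "?Q ;; ?Z = (?Q ;; \<langle>\<pi>\<^sub>0 (A \<Otimes> A) A ;; ?k, \<pi>\<^sub>1 (A \<Otimes> A) A\<rangle>) ;; R y"
      using g k by (subst comp_assoc[symmetric]) simp_all
    also have "?Q ;; \<langle>\<pi>\<^sub>0 (A \<Otimes> A) A ;; ?k, \<pi>\<^sub>1 (A \<Otimes> A) A\<rangle> = \<langle>\<pi>\<^sub>0 A A ;; (?i ;; ?k), \<pi>\<^sub>1 A A\<rangle>"
      using k
      by (simp add: comp_pair[of _ "(A \<Otimes> A) \<Otimes> A"] fprod_pi1_total fprod_pi0_total
          flip: comp_assoc)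
    also have "?i ;; ?k = ?h ;; ?i"
      using f by (simp add: iota0_comp_guarded_tanT)
    also have "\<langle>\<pi>\<^sub>0 A A ;; (?h ;; ?i), \<pi>\<^sub>1 A A\<rangle> = (?h \<otimes> ide A) ;; ?Q"
      using f by (subst fprod_comp) (simp_all add: fprod_eq)
    finally show ?thesis using f g by simp
  qed
  also have "\<langle>\<pi>\<^sub>0 A A ;; ?i, ?z\<rangle> ;; (R ?k ;; \<pi>\<^sub>1 A A)
      = rst (\<pi>\<^sub>0 A A ;; b) ;; (\<langle>\<pi>\<^sub>0 A A, ?z ;; \<pi>\<^sub>1 A A\<rangle> ;; R f)"
    using f g by (intro pair_iota0_comp_R_guarded_tanT) simp_all
  also have "?z ;; \<pi>\<^sub>1 A A = ?w"
    using f g dagger_y by (simp add: dagger_def)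
  also have "rst (\<pi>\<^sub>0 A A ;; b) ;; (\<langle>\<pi>\<^sub>0 A A, ?w\<rangle> ;; R f) = R (?h ;; g)"
  proof -
    have "R (?h ;; g) = \<langle>\<pi>\<^sub>0 A A, ?w\<rangle> ;; (rst (\<pi>\<^sub>0 A A ;; b) ;; R f)"
      using f g by (subst R_comp) (simp_all add: fprod_eq R_rst_comp)
    also have "\<dots> = rst ?w ;; (rst (\<pi>\<^sub>0 A A ;; b) ;; (\<langle>\<pi>\<^sub>0 A A, ?w\<rangle> ;; R f))"
      using f g by (subst comp_rst_assoc) (simp_all add: rst_rst_comp)
    also have "\<dots> = rst (\<pi>\<^sub>0 A A ;; b) ;; (rst ?w ;; (\<langle>\<pi>\<^sub>0 A A, ?w\<rangle> ;; R f))"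
      using f g by (intro rst_left_commute) simp_all
    also have "rst ?w ;; (\<langle>\<pi>\<^sub>0 A A, ?w\<rangle> ;; R f) = \<langle>\<pi>\<^sub>0 A A, ?w\<rangle> ;; R f"
      using f g by (intro dom_le_absorb dom_le_trans[OF dom_le_comp dom_le_pair_right]) simp_all
    finally show ?thesis ..
  qed
  finally show ?thesis using f g by simp
qed

lemma dagger_guard_pi1:
  assumes "src c = A"
  shows "dagger A A (rst (\<pi>\<^sub>0 A A ;; c) ;; \<pi>\<^sub>1 A A) = R (rst c)"
proof -
  let ?E = "\<pi>\<^sub>0 (A \<Otimes> A) A ;; (\<pi>\<^sub>0 A A ;; c)" and ?Q = "\<iota>\<^sub>0 A A \<otimes> ide A"
  have "R (rst (\<pi>\<^sub>0 A A ;; c) ;; \<pi>\<^sub>1 A A) = rst ?E ;; R (\<pi>\<^sub>1 A A)"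
    using assms by (subst R_rst_comp) simp_all
  then have "dagger A A (rst (\<pi>\<^sub>0 A A ;; c) ;; \<pi>\<^sub>1 A A) = ?Q ;; (rst ?E ;; \<pi>\<^sub>1 (A \<Otimes> A) A)"
    unfolding dagger_def using assms by simp
  also have "\<dots> = rst (?Q ;; ?E) ;; (?Q ;; \<pi>\<^sub>1 (A \<Otimes> A) A)"
    using assms by (subst comp_rst_assoc) simp_all
  also have "?Q ;; \<pi>\<^sub>1 (A \<Otimes> A) A = \<pi>\<^sub>1 A A"
    by (simp add: fprod_pi1_total)
  also have "?Q ;; ?E = \<pi>\<^sub>0 A A ;; c"
    using assms by (simp add: fprod_pi0_total_assoc)
  also have "rst (\<pi>\<^sub>0 A A ;; c) ;; \<pi>\<^sub>1 A A = R (rst c)"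
    using assms by (simp add: R_rst fprod_rst_ide)
  finally show ?thesis .
qed

lemma dagger_guarded_loop_iter:
  assumes f: "src f = A" "tgt f = A" "src bT = A" "src bF = A"
  shows "dagger A A ((iter (A \<Otimes> A) (rst (\<pi>\<^sub>0 A A ;; bT) ;; tanT C A f) i ;; rst (\<pi>\<^sub>0 A A ;; bF)) ;; \<pi>\<^sub>1 A A)
    = R (iter A (rst bT ;; f) i ;; rst bF)"
proof (induction i)
  case 0
  then show ?case using dagger_guard_pi1[of bF A] f by simp
next
  case (Suc i)
  have "src (rst (\<pi>\<^sub>0 A A ;; bT) ;; tanT C A f) = A \<Otimes> A"
    "tgt (rst (\<pi>\<^sub>0 A A ;; bT) ;; tanT C A f) = A \<Otimes> A"
    using f by (simp_all add: tanT_eq)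
  then show ?case
    using dagger_guarded_tanT_comp[OF f(1-3)] Suc f by simp
qed

end

locale disjoint_joins = restriction_category C for C :: "('o, 'm) rcat" +
  assumes disjoint_joins: "has_countable_disjoint_joins C"
begin

lemma join_exists:
  "\<forall>i\<in>I. hom C A B (fs i) \<Longrightarrow> pairwise_disjoint C I fs \<Longrightarrow> \<exists>j. is_join C A B I fs j"
  using disjoint_joins unfolding has_countable_disjoint_joins_def by blast

lemma join_comp:
  assumes "\<forall>i\<in>I. hom C A B (fs i)" "pairwise_disjoint C I fs" "is_join C A B I fs j"
    and "hom C X A h" "hom C B Y k"
  shows "is_join C X Y I (\<lambda>i. (h ;; fs i) ;; k) ((h ;; j) ;; k)"
proof -
  have "\<forall>A B X Y I fs j h k. (\<forall>i\<in>I. hom C A B (fs i)) \<and> pairwise_disjoint C I fs \<and>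
      is_join C A B I fs j \<and> hom C X A h \<and> hom C B Y k \<longrightarrow>
      is_join C X Y I (\<lambda>i. (h ;; fs i) ;; k) ((h ;; j) ;; k)"
    using disjoint_joins unfolding has_countable_disjoint_joins_def by (rule conjunct2)
  from this[rule_format, where A = A and B = B and X = X and Y = Y and I = I and fs = fs]
  show ?thesis using assms by simp
qed

text \<open>The least map \<open>X \<rightarrow> Y\<close>: a join over the empty index set, so the family is a dummy.\<close>
definition empty_map :: "'o \<Rightarrow> 'o \<Rightarrow> 'm" where
  "empty_map X Y = (SOME j. is_join C X Y {} (\<lambda>_. ide X) j)"

lemma empty_map_join: "is_join C X Y {} (\<lambda>_. ide X) (empty_map X Y)"
proof -
  have "\<exists>j. is_join C X Y {} (\<lambda>_. ide X) j"
    by (rule join_exists) (simp_all add: pairwise_disjoint_def)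
  thus ?thesis unfolding empty_map_def by (rule someI_ex)
qed

lemma empty_map_hom[simp]: "src (empty_map X Y) = X" "tgt (empty_map X Y) = Y"
  using empty_map_join unfolding is_join_def hom_def by blast+

lemma empty_map_le: "src g = X \<Longrightarrow> tgt g = Y \<Longrightarrow> rst (empty_map X Y) ;; g = empty_map X Y"
  using empty_map_join[of X Y] unfolding is_join_def hom_def rle_def by blast

lemma join_empty: "is_join C X Y {} fs j \<Longrightarrow> j = empty_map X Y"
proof -
  assume a: "is_join C X Y {} fs j"
  have "is_join C X Y {} (\<lambda>_. ide X) j" using a unfolding is_join_def by simp
  thus ?thesis using empty_map_join join_unique by blast
qed

lemma comp_empty_map:
  "src h = X' \<Longrightarrow> tgt h = X \<Longrightarrow> src k = Y \<Longrightarrow> tgt k = Y' \<Longrightarrow> (h ;; empty_map X Y) ;; k = empty_map X' Y'"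
proof -
  assume a: "src h = X'" "tgt h = X" "src k = Y" "tgt k = Y'"
  have "is_join C X' Y' {} (\<lambda>i. (h ;; (\<lambda>_. ide X) i) ;; k) ((h ;; empty_map X Y) ;; k)"
    using a by (intro join_comp[OF _ _ empty_map_join]) (simp_all add: pairwise_disjoint_def hom_def)
  thus ?thesis by (rule join_empty)
qed

lemma empty_map_comp[simp]: "src k = Y \<Longrightarrow> tgt k = Y' \<Longrightarrow> empty_map X Y ;; k = empty_map X Y'"
  using comp_empty_map[of "ide X" X X k Y Y'] by simp

lemma comp_empty_map_right[simp]: "src h = X' \<Longrightarrow> tgt h = X \<Longrightarrow> h ;; empty_map X Y = empty_map X' Y"
  using comp_empty_map[of h X' X "ide Y" Y Y] by simp

lemma rst_empty_map[simp]: "rst (empty_map X Y) = empty_map X X"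
proof -
  have b: "rst (empty_map X X) = empty_map X X" using empty_map_le[of "ide X" X X] by simp
  have "rst (empty_map X Y) = rst (empty_map X X ;; empty_map X Y)" by simp
  also have "\<dots> = rst (rst (empty_map X X) ;; empty_map X Y)" by (simp only: b)
  also have "\<dots> = rst (empty_map X X) ;; rst (empty_map X Y)" by (rule rst_rst_comp) simp
  also have "\<dots> = empty_map X X ;; rst (empty_map X Y)" by (simp only: b)
  also have "\<dots> = empty_map X X" by (rule empty_map_comp) simp_all
  finally show ?thesis .
qed

lemma nowhere_defined_empty_map: "nowhere_defined C x \<Longrightarrow> x = empty_map (src x) (tgt x)"
proof -
  assume a: "nowhere_defined C x"
  have "rle C x (empty_map (src x) (tgt x))"
    using a unfolding nowhere_defined_def parallel_def by simp
  moreover have "rle C (empty_map (src x) (tgt x)) x" by (simp add: rle_iff empty_map_le)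
  ultimately show ?thesis by (rule rle_antisym)
qed

lemma disjoint_mapsI:
  "src f = X \<Longrightarrow> src g = X \<Longrightarrow> tgt f = Y \<Longrightarrow> tgt g = Y \<Longrightarrow> rst f ;; rst g = empty_map X X \<Longrightarrow>
  disjoint_maps C f g"
proof -
  assume a: "src f = X" "src g = X" "tgt f = Y" "tgt g = Y" and b: "rst f ;; rst g = empty_map X X"
  have "rst f ;; g = (rst f ;; rst g) ;; g" using a by simp
  also have "\<dots> = empty_map X Y" using a b by simp
  finally have e: "rst f ;; g = empty_map X Y" .
  show ?thesis unfolding disjoint_maps_def nowhere_defined_def e
    using a by (simp add: parallel_def rle_iff empty_map_le)
qed

lemma empty_map_dom_le:
  assumes le: "dom_le x a" "dom_le y b"
    and dom: "src x = X" "src y = X" "src a = X" "src b = X"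
    and disjoint: "rst a ;; rst b = empty_map X X"
  shows "rst x ;; rst y = empty_map X X"
proof -
  have "rst x ;; rst y = (rst x ;; rst a) ;; (rst y ;; rst b)" using le by (simp add: dom_le_def)
  also have "\<dots> = rst x ;; (rst a ;; (rst y ;; rst b))" using dom by simp
  also have "rst a ;; (rst y ;; rst b) = rst y ;; (rst a ;; rst b)"
    using dom by (simp add: rst_left_commute)
  finally show ?thesis using dom disjoint by simp
qed

definition rst_disjoint :: "'o \<Rightarrow> (nat \<Rightarrow> 'm) \<Rightarrow> bool" where
  "rst_disjoint X F \<longleftrightarrow> (\<forall>i j. i \<noteq> j \<longrightarrow> rst (F i) ;; rst (F j) = empty_map X X)"

lemma rst_disjoint_rst: "rst_disjoint X (\<lambda>i. rst (F i)) = rst_disjoint X F"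
  by (simp add: rst_disjoint_def)

lemma rst_disjoint_pairwise_disjoint:
  "rst_disjoint X F \<Longrightarrow> (\<And>i. src (F i) = X) \<Longrightarrow> (\<And>i. tgt (F i) = Y) \<Longrightarrow> pairwise_disjoint C I F"
  unfolding pairwise_disjoint_def rst_disjoint_def by (blast intro: disjoint_mapsI)

lemma rst_disjoint_dom_le:
  assumes "rst_disjoint X F" "\<And>i. dom_le (G i) (F i)" "\<And>i. src (G i) = X" "\<And>i. src (F i) = X"
  shows "rst_disjoint X G"
  using assms unfolding rst_disjoint_def by (blast intro: empty_map_dom_le)

lemma comp_rst_disjoint:
  assumes "tgt h = X" "src a = X" "src c = X" "rst a ;; rst c = empty_map X X"
  shows "rst (h ;; a) ;; rst (h ;; c) = empty_map (src h) (src h)"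
proof -
  have "rst (h ;; a) ;; rst (h ;; c) = rst (h ;; rst a) ;; rst (h ;; rst c)"
    using assms by (simp add: rst_comp_rst)
  also have "\<dots> = rst ((h ;; rst a) ;; rst c)" using assms by (simp add: rst_comp_rst_rst)
  also have "(h ;; rst a) ;; rst c = h ;; empty_map X X" using assms by simp
  finally show ?thesis using assms by simp
qed

lemma rst_disjoint_comp_left:
  "rst_disjoint X F \<Longrightarrow> (\<And>i. src (F i) = X) \<Longrightarrow> src h = X' \<Longrightarrow> tgt h = X \<Longrightarrow>
   rst_disjoint X' (\<lambda>i. h ;; F i)"
  unfolding rst_disjoint_def using comp_rst_disjoint by metis

lemma rst_disjoint_join_comp:
  assumes "rst_disjoint X F" "\<And>i. src (F i) = X" "\<And>i. tgt (F i) = Y" "is_join C X Y UNIV F J"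
    and "src h = X'" "tgt h = X" "src k = Y" "tgt k = Y'"
  shows "is_join C X' Y' UNIV (\<lambda>i. (h ;; F i) ;; k) ((h ;; J) ;; k)"
  using assms
  by (intro join_comp rst_disjoint_pairwise_disjoint[of X F Y]) (simp_all add: hom_def)

lemma join_hom: "is_join C X Y I F J \<Longrightarrow> src J = X \<and> tgt J = Y"
  unfolding is_join_def hom_def by simp

lemma join_le: "is_join C X Y I F J \<Longrightarrow> i \<in> I \<Longrightarrow> rst (F i) ;; J = F i"
  unfolding is_join_def rle_def by simp

lemma join_least:
  "is_join C X Y I F J \<Longrightarrow> src k = X \<Longrightarrow> tgt k = Y \<Longrightarrow> (\<And>i. i \<in> I \<Longrightarrow> rle C (F i) k) \<Longrightarrow> rle C J k"
  unfolding is_join_def hom_def by simp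

lemma join_rst_rst: "is_join C X X I (\<lambda>i. rst (G i)) L \<Longrightarrow> (\<And>i. src (G i) = X) \<Longrightarrow> rst L = L"
proof -
  assume L: "is_join C X X I (\<lambda>i. rst (G i)) L" and G: "\<And>i. src (G i) = X"
  have "rle C L (ide X)" by (rule join_least[OF L]) (simp_all add: rle_iff G)
  then show "rst L = L" using join_hom[OF L] by (simp add: rle_iff)
qed

lemma rst_join:
  assumes G: "rst_disjoint X G" "\<And>i. src (G i) = X" "\<And>i. tgt (G i) = Y"
    and K: "is_join C X Y UNIV G K"
  shows "is_join C X X UNIV (\<lambda>i. rst (G i)) (rst K)"
proof -
  have Kt: "src K = X" "tgt K = Y" using join_hom[OF K] by simp_all
  have "pairwise_disjoint C UNIV (\<lambda>i. rst (G i))"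
    by (rule rst_disjoint_pairwise_disjoint[of X]) (simp_all add: rst_disjoint_rst G)
  then obtain L where L: "is_join C X X UNIV (\<lambda>i. rst (G i)) L"
    using join_exists[where I = UNIV and A = X and B = X and fs = "\<lambda>i. rst (G i)"] G by (auto simp: hom_def)
  have Lt: "src L = X" "tgt L = X" and Lr: "rst L = L"
    using join_hom[OF L] join_rst_rst[OF L] G by simp_all
  have GK: "\<And>i. rst (G i) ;; K = G i" using join_le[OF K] by simp
  have GL: "\<And>i. rst (G i) ;; rst L = rst (G i)" using join_le[OF L] Lr by simp
  have "rle C L (rst K)"
  proof (rule join_least[OF L])
    fix i
    show "rle C (rst (G i)) (rst K)" using GK G Kt rst_rst_comp[of "G i" K] by (simp add: rle_iff)
  qed (simp_all add: Kt)
  moreover have "rle C (rst K) L"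
  proof -
    have "rle C K (rst L ;; K)"
    proof (rule join_least[OF K])
      fix i
      have "rst (G i) ;; (rst L ;; K) = G i" using G Kt Lt GL GK by (simp flip: comp_assoc)
      then show "rle C (G i) (rst L ;; K)" using G Kt Lt by (simp add: rle_iff)
    qed (simp_all add: Kt Lt)
    then have "rst K ;; (rst L ;; K) = K" by (simp add: rle_iff)
    then have "rst K = rst (rst K ;; (rst L ;; K))" by simp
    also have "\<dots> = rst L ;; rst K"
      using Kt Lt by (simp add: rst_rst_comp rst_left_commute[of K L])
    finally show ?thesis using Kt Lt Lr rst_commute[of K L] by (simp add: rle_iff)
  qed
  ultimately have "L = rst K" by (rule rle_antisym)
  then show ?thesis using L by simp
qed

text \<open>The \<open>i\<close>-th unrolling exits through \<open>c\<close> where the \<open>j\<close>-th one, \<open>i < j\<close>, must still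
  pass the guard \<open>a\<close>, which is disjoint from \<open>c\<close>.\<close>
lemma rst_iter_disjoint_less:
  assumes t: "src m = X" "tgt m = X" "src a = X" "src c = X"
    and disjoint: "rst a ;; rst c = empty_map X X" and ij: "i < j"
  shows "rst (iter X (rst a ;; m) i ;; rst c) ;; rst (iter X (rst a ;; m) j ;; rst c) = empty_map X X"
proof -
  let ?m = "rst a ;; m"
  obtain d where j: "j = i + Suc d" using ij less_iff_Suc_add by auto
  let ?x = "iter X ?m i" and ?V = "m ;; (iter X ?m d ;; rst c)"
  have "iter X ?m j ;; rst c = ?x ;; (rst a ;; ?V)"
    unfolding j using t by (subst iter_add) simp_all
  then have "rst (iter X ?m j ;; rst c) = rst (?x ;; rst (rst a ;; ?V))"
    using t by (simp add: rst_comp_rst)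
  then have "rst (?x ;; rst c) ;; rst (iter X ?m j ;; rst c) = rst ((?x ;; rst c) ;; rst (rst a ;; ?V))"
    using t by (simp add: rst_comp_rst_rst)
  also have "(?x ;; rst c) ;; rst (rst a ;; ?V) = ?x ;; ((rst c ;; rst a) ;; rst ?V)"
    using t by (simp add: rst_rst_comp)
  also have "rst c ;; rst a = empty_map X X" using disjoint t rst_commute[of c a] by simp
  finally show ?thesis using t by simp
qed

lemma rst_disjoint_iter:
  assumes "src m = X" "tgt m = X" "src a = X" "src c = X" "rst a ;; rst c = empty_map X X"
  shows "rst_disjoint X (\<lambda>i. iter X (rst a ;; m) i ;; rst c)"
  unfolding rst_disjoint_def
proof (intro allI impI)
  fix i j :: nat
  assume "i \<noteq> j"
  then consider "i < j" | "j < i" by arith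
  then show "rst (iter X (rst a ;; m) i ;; rst c) ;; rst (iter X (rst a ;; m) j ;; rst c) = empty_map X X"
  proof cases
    case 1
    then show ?thesis by (rule rst_iter_disjoint_less[OF assms])
  next
    case 2
    then have "rst (iter X (rst a ;; m) j ;; rst c) ;; rst (iter X (rst a ;; m) i ;; rst c) = empty_map X X"
      by (rule rst_iter_disjoint_less[OF assms])
    then show ?thesis
      using assms rst_commute[of "iter X (rst a ;; m) i ;; rst c" "iter X (rst a ;; m) j ;; rst c"]
      by simp
  qed
qed

end

locale reverse_differential_joins = reverse_differential C for C :: "('o, 'm) rcat" +
  assumes disjoint_joins: "has_countable_disjoint_joins C"

sublocale reverse_differential_joins \<subseteq> disjoint_joins
  by unfold_locales (rule disjoint_joins)

context reverse_differential_joins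
begin

lemma rst_disjoint_R:
  "rst_disjoint X F \<Longrightarrow> (\<And>i. src (F i) = X) \<Longrightarrow> (\<And>i. tgt (F i) = Y) \<Longrightarrow>
   rst_disjoint (X \<Otimes> Y) (\<lambda>i. R (F i))"
  using rst_disjoint_comp_left[of X F "\<pi>\<^sub>0 X Y"] by (simp add: rst_disjoint_def rst_R_eq)

lemma R_join:
  assumes F: "rst_disjoint X F" "\<And>i. src (F i) = X" "\<And>i. tgt (F i) = Y"
    and J: "is_join C X Y UNIV F J"
  shows "is_join C (X \<Otimes> Y) X UNIV (\<lambda>i. R (F i)) (R J)"
proof -
  have Jt: "src J = X" "tgt J = Y" using join_hom[OF J] by simp_all
  have "is_join C (X \<Otimes> Y) Y UNIV (\<lambda>i. (\<pi>\<^sub>0 X Y ;; F i) ;; ide Y) ((\<pi>\<^sub>0 X Y ;; J) ;; ide Y)"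
    using F J by (rule rst_disjoint_join_comp) simp_all
  then have "is_join C (X \<Otimes> Y) Y UNIV (\<lambda>i. \<pi>\<^sub>0 X Y ;; F i) (\<pi>\<^sub>0 X Y ;; J)"
    using F Jt by simp
  moreover have F0: "rst_disjoint (X \<Otimes> Y) (\<lambda>i. \<pi>\<^sub>0 X Y ;; F i)"
    using F by (intro rst_disjoint_comp_left) simp_all
  ultimately have "is_join C (X \<Otimes> Y) (X \<Otimes> Y) UNIV (\<lambda>i. rst (\<pi>\<^sub>0 X Y ;; F i)) (rst (\<pi>\<^sub>0 X Y ;; J))"
    using F by (intro rst_join) simp_all
  then have "is_join C (X \<Otimes> Y) X UNIV (\<lambda>i. (ide (X \<Otimes> Y) ;; rst (\<pi>\<^sub>0 X Y ;; F i)) ;; R J)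
      ((ide (X \<Otimes> Y) ;; rst (\<pi>\<^sub>0 X Y ;; J)) ;; R J)"
    using F0 F Jt by (intro rst_disjoint_join_comp) (simp_all add: rst_disjoint_rst)
  moreover have "rst (\<pi>\<^sub>0 X Y ;; F i) ;; R J = R (F i)" for i
    using join_le[OF J, of i] F Jt R_rst_comp[of "F i" X J Y] by simp
  ultimately show ?thesis using F Jt by (simp add: rst_R_eq[symmetric])
qed

lemma dagger_join:
  assumes G: "rst_disjoint (A \<Otimes> B) G" "\<And>i. src (G i) = A \<Otimes> B" "\<And>i. tgt (G i) = E"
    and J: "is_join C (A \<Otimes> B) E UNIV G J"
  shows "is_join C (A \<Otimes> E) B UNIV (\<lambda>i. dagger A B (G i)) (dagger A B J)"
proof -
  have "is_join C (A \<Otimes> E) B UNIV (\<lambda>i. ((\<iota>\<^sub>0 A B \<otimes> ide E) ;; R (G i)) ;; \<pi>\<^sub>1 A B)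
      (((\<iota>\<^sub>0 A B \<otimes> ide E) ;; R J) ;; \<pi>\<^sub>1 A B)"
    using G rst_disjoint_R[OF G] R_join[OF G J] by (intro rst_disjoint_join_comp) simp_all
  then show ?thesis using G join_hom[OF J] by (simp add: dagger_def)
qed


theorem R_while_loop:
  assumes f: "src f = A" "tgt f = A" and b: "src bT = A" "src bF = A"
    and disjoint: "rst bT ;; rst bF = empty_map A A"
    and W: "is_join C A A UNIV (\<lambda>i. iter A (rst bT ;; f) i ;; rst bF) W"
    and W': "is_join C (A \<Otimes> A) (A \<Otimes> A) UNIV
      (\<lambda>i. iter (A \<Otimes> A) (rst (\<pi>\<^sub>0 A A ;; bT) ;; tanT C A f) i ;; rst (\<pi>\<^sub>0 A A ;; bF)) W'"
  shows "R W = dagger A A (W' ;; \<pi>\<^sub>1 A A)"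
proof -
  let ?F = "\<lambda>i. iter (A \<Otimes> A) (rst (\<pi>\<^sub>0 A A ;; bT) ;; tanT C A f) i ;; rst (\<pi>\<^sub>0 A A ;; bF)"
  have T: "src (tanT C A f) = A \<Otimes> A" "tgt (tanT C A f) = A \<Otimes> A" using f by (simp_all add: tanT_eq)
  have "rst (\<pi>\<^sub>0 A A ;; bT) ;; rst (\<pi>\<^sub>0 A A ;; bF) = empty_map (A \<Otimes> A) (A \<Otimes> A)"
    using comp_rst_disjoint[OF _ b disjoint, of "\<pi>\<^sub>0 A A"] by simp
  then have F: "rst_disjoint (A \<Otimes> A) ?F"
    using b T by (intro rst_disjoint_iter) simp_all
  have RW: "is_join C (A \<Otimes> A) A UNIV (\<lambda>i. R (iter A (rst bT ;; f) i ;; rst bF)) (R W)"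
    using f b disjoint by (intro R_join[OF rst_disjoint_iter _ _ W]) simp_all
  have "is_join C (A \<Otimes> A) A UNIV (\<lambda>i. ?F i ;; \<pi>\<^sub>1 A A) (W' ;; \<pi>\<^sub>1 A A)"
    using rst_disjoint_join_comp[OF F _ _ W', of "ide (A \<Otimes> A)" "A \<Otimes> A" "\<pi>\<^sub>1 A A" A]
      join_hom[OF W'] b T by simp
  moreover have "rst_disjoint (A \<Otimes> A) (\<lambda>i. ?F i ;; \<pi>\<^sub>1 A A)"
    using b T by (intro rst_disjoint_dom_le[OF F] dom_le_comp) simp_all
  ultimately have "is_join C (A \<Otimes> A) A UNIV (\<lambda>i. dagger A A (?F i ;; \<pi>\<^sub>1 A A))
      (dagger A A (W' ;; \<pi>\<^sub>1 A A))"
    using b T join_hom[OF W'] by (intro dagger_join) simp_all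
  moreover have "dagger A A (?F i ;; \<pi>\<^sub>1 A A) = R (iter A (rst bT ;; f) i ;; rst bF)" for i
    using f b by (rule dagger_guarded_loop_iter)
  ultimately show ?thesis
    using join_unique[OF RW] by simp
qed

end

theorem mainTheorem6:
  fixes C :: "('o, 'm) rcat" and A :: 'o and f bT bF W W' :: 'm
  assumes rdrc: "is_rdrc C"
    and joins: "has_countable_disjoint_joins C"
    and hf: "hom C A A f"
    and hbT: "hom C A (c_one C) bT"
    and hbF: "hom C A (c_one C) bF"
    and disj: "nowhere_defined C (c_cmp C (c_rst C bT) (c_rst C bF))"
    and hW: "is_join C A A UNIV
               (\<lambda>i. c_cmp C (mpow C A (c_cmp C (c_rst C bT) f) i) (c_rst C bF)) W"
    and hW': "is_join C (c_prod C A A) (c_prod C A A) UNIV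
               (\<lambda>i. c_cmp C
                      (mpow C (c_prod C A A)
                         (c_cmp C (c_rst C (c_cmp C (c_pi0 C A A) bT)) (tanT C A f)) i)
                      (c_rst C (c_cmp C (c_pi0 C A A) bF))) W'"
  shows "c_R C W =
           c_cmp C (c_cmp C (fprod C (iota0 C A A) (c_id C A))
                            (c_R C (c_cmp C W' (c_pi1 C A A))))
                   (c_pi1 C A A)"
proof -
  interpret reverse_differential_joins C
    using rdrc joins by unfold_locales
  have hom: "src f = A" "tgt f = A" "src bT = A" "src bF = A"
    using hf hbT hbF by (simp_all add: hom_def)
  have "rst bT ;; rst bF = empty_map A A"
    using nowhere_defined_empty_map[OF disj] hom by simp
  then have "R W = dagger A A (W' ;; \<pi>\<^sub>1 A A)"
    using R_while_loop[OF hom] hW hW' by blast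
  then show ?thesis
    using hom join_hom[OF hW'] by (simp add: dagger_def)
qed

end
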